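(* Let $p$ be a prime, $R=W(\overline{\mathbb{F}}_p)$ with Frobenius $\phi$ and $p$-derivation $\delta(x)=(\phi(x)-x^p)/p$, and let $f\in R[y,y',\dots,y^{(r)}]^{\wedge}$ ($p$-adic completion). An element $u\in R$ is a solution of $f(u,\delta u,\dots,\delta^r u)=0$ if and only if (a) $f(\nabla(u))\equiv0\ \mathrm{mod}\ p$, and (b) for all $i\ge0$: $\frac{\partial(\delta^i f)}{\partial p}(\nabla(u)^p)\equiv-\sum_{j\ge0}\frac{\partial(\delta^i f)^{(\phi)}}{\partial y^{(j)}}(\nabla(u)^p)\,\delta^{j+1}u\ \mathrm{mod}\ p$. Moreover, $u$ is a solution of $(\delta f)(u,\delta u,\dots,\delta^{r+1}u)=0$ if and only if (b) holds.
   Context: $R[y,y',y'',\dots]^\wedge$ carries the $p$-derivation $\delta$ extending that of $R$ with $\delta y^{(j)}=y^{(j+1)}$, so $\delta^i f\in R[y,\dots,y^{(r+i)}]^\wedge$. For $u\in R$: $\nabla(u)=(u,\delta u,\delta^2u,\dots)$ and $\nabla(u)^p=(u^p,(\delta u)^p,(\delta^2u)^p,\dots)$. For $g\in R[y,\dots,y^{(s)}]^\wedge$, $g^{(\phi)}$ is $g$ with $\phi$ applied to its coefficients, and $\frac{\partial g}{\partial p}:=\frac1p\big(g^{(\phi)}(y^p,(y')^p,\dots,(y^{(s)})^p)-g(y,\dots,y^{(s)})^p\big)$. *)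

theory Defs
  imports Main "HOL-Library.Poly_Mapping" "HOL-Computational_Algebra.Polynomial"
    "HOL-Computational_Algebra.Primes"
begin

text \<open>R is an abstract commutative ring (type 'a) together with an endomorphism phi,
  subject to conditions characterising (up to unique isomorphism) the Witt vectors
  W(F_p-bar) with their Frobenius: R is p-torsion free, p-adically separated and complete,
  R/pR is a field which is algebraic over F_p and algebraically closed, and phi is a ring
  endomorphism lifting the p-th power map mod p (on W(k), k perfect, the Frobenius lift is
  unique).\<close>

definition Witt_Fpbar_Frobenius :: "nat \<Rightarrow> ('a::comm_ring_1 \<Rightarrow> 'a) \<Rightarrow> bool" where
  "Witt_Fpbar_Frobenius p phi \<longleftrightarrow>
     prime p \<and>
     (\<forall>x::'a. of_nat p * x = 0 \<longrightarrow> x = 0) \<and>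
     (\<forall>x::'a. (\<forall>n. (of_nat p) ^ n dvd x) \<longrightarrow> x = 0) \<and>
     (\<forall>s::nat \<Rightarrow> 'a. (\<forall>n. (of_nat p) ^ n dvd (s (Suc n) - s n)) \<longrightarrow>
         (\<exists>l. \<forall>n. (of_nat p) ^ n dvd (l - s n))) \<and>
     \<not> (of_nat p dvd (1::'a)) \<and>
     (\<forall>x::'a. \<not> of_nat p dvd x \<longrightarrow> (\<exists>y. of_nat p dvd (x * y - 1))) \<and>
     (\<forall>x::'a. \<exists>n>0. of_nat p dvd (x ^ (p ^ n) - x)) \<and>
     (\<forall>P::'a poly. degree P > 0 \<and> lead_coeff P = 1 \<longrightarrow> (\<exists>x. of_nat p dvd poly P x)) \<and>
     phi 1 = 1 \<and> (\<forall>x y. phi (x + y) = phi x + phi y) \<and> (\<forall>x y. phi (x * y) = phi x * phi y) \<and>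
     (\<forall>x. of_nat p dvd (phi x - x ^ p))"

text \<open>Division by p (well defined in a p-torsion-free ring when p divides the argument).\<close>
definition div_p :: "nat \<Rightarrow> 'a::comm_ring_1 \<Rightarrow> 'a" where
  "div_p p x = (THE y. of_nat p * y = x)"

definition delta :: "nat \<Rightarrow> ('a::comm_ring_1 \<Rightarrow> 'a) \<Rightarrow> 'a \<Rightarrow> 'a" where
  "delta p phi x = div_p p (phi x - x ^ p)"

definition nabla :: "nat \<Rightarrow> ('a::comm_ring_1 \<Rightarrow> 'a) \<Rightarrow> 'a \<Rightarrow> nat \<Rightarrow> 'a" where
  "nabla p phi u = (\<lambda>j. (delta p phi ^^ j) u)"

definition nabla_pow :: "nat \<Rightarrow> ('a::comm_ring_1 \<Rightarrow> 'a) \<Rightarrow> 'a \<Rightarrow> nat \<Rightarrow> 'a" where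
  "nabla_pow p phi u = (\<lambda>j. ((delta p phi ^^ j) u) ^ p)"

text \<open>An element of the p-adic completion of R[y^(0), y^(1), ...] is represented by its
  coefficient function on monomials (monomial = finitely supported exponent vector
  (nat =>0 nat), variable j standing for y^(j)); it must be p-adically restricted:
  for every n only finitely many coefficients are not divisible by p^n.\<close>

type_synonym 'a pser = "(nat \<Rightarrow>\<^sub>0 nat) \<Rightarrow> 'a"

definition restricted :: "nat \<Rightarrow> 'a::comm_ring_1 pser \<Rightarrow> bool" where
  "restricted p c \<longleftrightarrow> (\<forall>n. finite {m. \<not> (of_nat p) ^ n dvd c m})"

definition in_vars :: "nat \<Rightarrow> 'a::zero pser \<Rightarrow> bool" where
  "in_vars r c \<longleftrightarrow> (\<forall>m. c m \<noteq> 0 \<longrightarrow> Poly_Mapping.keys m \<subseteq> {..r})"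

definition mono_eval :: "(nat \<Rightarrow> 'a::comm_ring_1) \<Rightarrow> (nat \<Rightarrow>\<^sub>0 nat) \<Rightarrow> 'a" where
  "mono_eval x m = (\<Prod>j\<in>Poly_Mapping.keys m. x j ^ Poly_Mapping.lookup m j)"

text \<open>Evaluation at a point x (value of y^(j) is x j), as a p-adically convergent sum.\<close>
definition ps_eval :: "nat \<Rightarrow> 'a::comm_ring_1 pser \<Rightarrow> (nat \<Rightarrow> 'a) \<Rightarrow> 'a" where
  "ps_eval p c x = (THE s. \<forall>n. \<exists>F. finite F \<and>
      (\<forall>G. finite G \<and> F \<subseteq> G \<longrightarrow> (of_nat p) ^ n dvd (s - (\<Sum>m\<in>G. c m * mono_eval x m))))"

definition ps_one :: "'a::comm_ring_1 pser" where
  "ps_one = (\<lambda>m. if m = 0 then 1 else 0)"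

definition ps_var :: "nat \<Rightarrow> 'a::comm_ring_1 pser" where
  "ps_var j = (\<lambda>m. if m = Poly_Mapping.single j 1 then 1 else 0)"

definition ps_add :: "'a::comm_ring_1 pser \<Rightarrow> 'a pser \<Rightarrow> 'a pser" where
  "ps_add c d = (\<lambda>m. c m + d m)"

definition ps_smul :: "'a::comm_ring_1 \<Rightarrow> 'a pser \<Rightarrow> 'a pser" where
  "ps_smul a c = (\<lambda>m. a * c m)"

definition ps_mult :: "'a::comm_ring_1 pser \<Rightarrow> 'a pser \<Rightarrow> 'a pser" where
  "ps_mult c d = (\<lambda>m. \<Sum>(a, b)\<in>{(a, b). a + b = m}. c a * d b)"

definition ps_pow :: "'a::comm_ring_1 pser \<Rightarrow> nat \<Rightarrow> 'a pser" where
  "ps_pow c k = (ps_mult c ^^ k) ps_one"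

text \<open>The image of y^(j) under the Frobenius lift of R[y,y',...]^: (y^(j))^p + p y^(j+1).\<close>
definition frob_var :: "nat \<Rightarrow> nat \<Rightarrow> 'a::comm_ring_1 pser" where
  "frob_var p j = ps_add (ps_pow (ps_var j) p) (ps_smul (of_nat p) (ps_var (Suc j)))"

definition frob_mono :: "nat \<Rightarrow> (nat \<Rightarrow>\<^sub>0 nat) \<Rightarrow> 'a::comm_ring_1 pser" where
  "frob_mono p m = foldr (\<lambda>j acc. ps_mult (ps_pow (frob_var p j) (Poly_Mapping.lookup m j)) acc)
      (sorted_list_of_set (Poly_Mapping.keys m)) ps_one"

text \<open>The Frobenius lift phi on R[y,y',...]^ extending phi on R with
  phi(y^(j)) = (y^(j))^p + p y^(j+1) (for each target monomial only finitely many source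
  monomials contribute).\<close>
definition ps_phi :: "nat \<Rightarrow> ('a::comm_ring_1 \<Rightarrow> 'a) \<Rightarrow> 'a pser \<Rightarrow> 'a pser" where
  "ps_phi p phi (c :: 'a pser) = (\<lambda>n. \<Sum>m\<in>{m. c m \<noteq> 0 \<and> (frob_mono p m n :: 'a) \<noteq> 0}. phi (c m) * frob_mono p m n)"

definition ps_delta :: "nat \<Rightarrow> ('a::comm_ring_1 \<Rightarrow> 'a) \<Rightarrow> 'a pser \<Rightarrow> 'a pser" where
  "ps_delta p phi c = (\<lambda>n. div_p p (ps_phi p phi c n - ps_pow c p n))"

definition coeff_phi :: "('a \<Rightarrow> 'a) \<Rightarrow> 'a pser \<Rightarrow> 'a pser" where
  "coeff_phi phi c = (\<lambda>m. phi (c m))"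

definition ps_deriv :: "nat \<Rightarrow> 'a::comm_ring_1 pser \<Rightarrow> 'a pser" where
  "ps_deriv j c = (\<lambda>m. of_nat (Suc (Poly_Mapping.lookup m j)) * c (m + Poly_Mapping.single j 1))"

text \<open>Substitution y^(j) := (y^(j))^p.\<close>
definition pow_subst :: "nat \<Rightarrow> 'a::comm_ring_1 pser \<Rightarrow> 'a pser" where
  "pow_subst p c = (\<lambda>n. \<Sum>m\<in>{m. c m \<noteq> 0 \<and> Poly_Mapping.map (\<lambda>k. p * k) m = n}. c m)"

definition ps_dp :: "nat \<Rightarrow> ('a::comm_ring_1 \<Rightarrow> 'a) \<Rightarrow> 'a pser \<Rightarrow> 'a pser" where
  "ps_dp p phi c = (\<lambda>n. div_p p (pow_subst p (coeff_phi phi c) n - ps_pow c p n))"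

end

theory Submission
  imports Defs "HOL-Library.FuncSet"
begin

text \<open>Since \<open>R\<close> is \<open>p\<close>-torsion free and \<open>p\<close>-adically separated, and \<open>\<delta>(p\<^sup>k\<^sup>+\<^sup>1w) = p\<^sup>k w'\<close> with
  \<open>w' \<equiv> \<phi>(w)\<close> modulo \<open>p\<close>, the map \<open>\<delta>\<close> lowers the valuation of a nonzero element by one; hence \<open>x = 0\<close>
  iff \<open>p\<close> divides \<open>\<delta>\<^sup>ix\<close> for all \<open>i \<ge> 0\<close>. Evaluation at \<open>\<nabla>u\<close> intertwines the \<open>p\<close>-derivations,
  \<open>(\<delta>\<^sup>if)(\<nabla>u) = \<delta>\<^sup>i(f(\<nabla>u))\<close>, because \<open>\<phi>(\<delta>\<^sup>ju) = (\<delta>\<^sup>ju)\<^sup>p + p\<delta>\<^sup>j\<^sup>+\<^sup>1u\<close> is the value of the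
  Frobenius lift of \<open>y\<^sup>(\<^sup>j\<^sup>)\<close>. Finally \<open>p(\<delta>g)(\<nabla>u) = g\<^sup>(\<^sup>\<phi>\<^sup>)(\<nabla>(u)\<^sup>p + p\<delta>\<nabla>u) - g(\<nabla>u)\<^sup>p\<close>, so a
  first-order Taylor expansion modulo \<open>p\<^sup>2\<close> around \<open>\<nabla>(u)\<^sup>p\<close> shows that condition (b) for
  \<open>g = \<delta>\<^sup>if\<close> says exactly that \<open>p\<close> divides \<open>(\<delta>\<^sup>i\<^sup>+\<^sup>1f)(\<nabla>u)\<close>.\<close>

section \<open>Monomials and coefficient functions\<close>

lemma lookup_map_pm:
  "Poly_Mapping.lookup (Poly_Mapping.map f m) k =
     (if Poly_Mapping.lookup m k = 0 then 0 else f (Poly_Mapping.lookup m k))"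
  by transfer (simp add: when_def)

lemma finite_bounded_poly_mappings:
  assumes "finite K"
  shows "finite {a :: nat \<Rightarrow>\<^sub>0 nat. Poly_Mapping.keys a \<subseteq> K \<and> (\<forall>i\<in>K. Poly_Mapping.lookup a i \<le> B i)}"
    (is "finite ?S")
proof -
  have "inj_on (\<lambda>a. restrict (Poly_Mapping.lookup a) K) ?S"
  proof (rule inj_onI)
    fix a b assume a: "a \<in> ?S" and b: "b \<in> ?S"
      and eq: "restrict (Poly_Mapping.lookup a) K = restrict (Poly_Mapping.lookup b) K"
    show "a = b"
    proof (rule poly_mapping_eqI)
      fix i show "Poly_Mapping.lookup a i = Poly_Mapping.lookup b i"
      proof (cases "i \<in> K")
        case True then show ?thesis using fun_cong[OF eq, of i] by simp
      next
        case False
        then have "i \<notin> Poly_Mapping.keys a" "i \<notin> Poly_Mapping.keys b" using a b by auto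
        then show ?thesis by (simp add: in_keys_iff)
      qed
    qed
  qed
  moreover have "(\<lambda>a. restrict (Poly_Mapping.lookup a) K) ` ?S \<subseteq> PiE K (\<lambda>i. {..B i})"
    by (rule image_subsetI) (simp add: PiE_iff)
  moreover have "finite (PiE K (\<lambda>i. {..B i}))" using assms by (intro finite_PiE) auto
  ultimately show ?thesis by (meson finite_imageD finite_subset)
qed

lemma finite_summands: "finite {a :: nat \<Rightarrow>\<^sub>0 nat. \<exists>b. a + b = m}"
proof -
  have "{a :: nat \<Rightarrow>\<^sub>0 nat. \<exists>b. a + b = m} \<subseteq> {a. Poly_Mapping.keys a \<subseteq> Poly_Mapping.keys m \<and>
      (\<forall>i\<in>Poly_Mapping.keys m. Poly_Mapping.lookup a i \<le> Poly_Mapping.lookup m i)}"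
    by (auto simp: in_keys_iff lookup_add)
  then show ?thesis by (rule finite_subset) (rule finite_bounded_poly_mappings, simp)
qed

lemma finite_additive_decompositions: "finite {(a, b). (a :: nat \<Rightarrow>\<^sub>0 nat) + b = m}"
proof -
  have "{(a, b). (a :: nat \<Rightarrow>\<^sub>0 nat) + b = m} \<subseteq> {a. \<exists>b. a + b = m} \<times> {a. \<exists>b. a + b = m}"
    by (auto intro: add.commute)
  then show ?thesis using finite_summands[of m] by (meson finite_SigmaI finite_subset)
qed

abbreviation pm_scale :: "nat \<Rightarrow> (nat \<Rightarrow>\<^sub>0 nat) \<Rightarrow> (nat \<Rightarrow>\<^sub>0 nat)" where
  "pm_scale k \<equiv> Poly_Mapping.map (\<lambda>i. k * i)"

lemma lookup_pm_scale: "Poly_Mapping.lookup (pm_scale k m) j = k * Poly_Mapping.lookup m j"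
  by (simp add: lookup_map_pm)

lemma pm_map_zero [simp]: "Poly_Mapping.map (\<lambda>_. 0) m = 0"
  by (intro poly_mapping_eqI) (simp add: lookup_map_pm)

lemma pm_scale_Suc: "m + pm_scale k m = pm_scale (Suc k) m"
  by (intro poly_mapping_eqI) (simp add: lookup_map_pm lookup_add)

lemma pm_scale_eq_iff: "k > 0 \<Longrightarrow> pm_scale k a = pm_scale k b \<longleftrightarrow> a = b"
  by (metis lookup_pm_scale mult_cancel1 neq0_conv poly_mapping_eqI)

lemma keys_pm_scale: "k > 0 \<Longrightarrow> Poly_Mapping.keys (pm_scale k m) = Poly_Mapping.keys m"
  by (simp add: in_keys_iff lookup_map_pm set_eq_iff)

lemma pow_subst_pm_scale: "p > 0 \<Longrightarrow> pow_subst p c (pm_scale p m) = c m"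
proof -
  assume "p > 0"
  then have "{m'. c m' \<noteq> 0 \<and> pm_scale p m' = pm_scale p m} = (if c m = 0 then {} else {m})"
    by (auto simp: pm_scale_eq_iff)
  then show ?thesis unfolding pow_subst_def by simp
qed

lemma pow_subst_outside_range: "n \<notin> range (pm_scale p) \<Longrightarrow> pow_subst p c n = 0"
proof -
  assume "n \<notin> range (pm_scale p)"
  then have "{m'. c m' \<noteq> 0 \<and> pm_scale p m' = n} = {}" by auto
  then show ?thesis unfolding pow_subst_def by (simp only: sum.empty)
qed

lemma mono_eval_superset:
  assumes "finite K" "Poly_Mapping.keys m \<subseteq> K"
  shows "mono_eval x m = (\<Prod>j\<in>K. x j ^ Poly_Mapping.lookup m j)"
  unfolding mono_eval_def by (rule prod.mono_neutral_left[OF assms]) (simp add: in_keys_iff)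

lemma mono_eval_add: "mono_eval x (a + b) = mono_eval x a * mono_eval x b"
proof -
  let ?K = "Poly_Mapping.keys a \<union> Poly_Mapping.keys b"
  have "mono_eval x (a + b) = (\<Prod>j\<in>?K. x j ^ Poly_Mapping.lookup (a + b) j)"
    by (intro mono_eval_superset) (simp_all add: keys_add)
  also have "\<dots> = (\<Prod>j\<in>?K. x j ^ Poly_Mapping.lookup a j) * (\<Prod>j\<in>?K. x j ^ Poly_Mapping.lookup b j)"
    unfolding lookup_add power_add by (rule prod.distrib)
  also have "\<dots> = mono_eval x a * mono_eval x b" by (subst (1 2) mono_eval_superset[of ?K]) auto
  finally show ?thesis .
qed

lemma mono_eval_0 [simp]: "mono_eval x 0 = 1"
  unfolding mono_eval_def by simp

lemma mono_eval_single [simp]: "mono_eval x (Poly_Mapping.single j k) = x j ^ k"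
  unfolding mono_eval_def by simp

lemma mono_eval_pm_scale: "k > 0 \<Longrightarrow> mono_eval x (pm_scale k m) = mono_eval (\<lambda>j. x j ^ k) m"
  unfolding mono_eval_def by (simp add: keys_pm_scale lookup_pm_scale power_mult)

lemma ps_pow_0 [simp]: "ps_pow c 0 = ps_one"
  by (simp add: ps_pow_def)

lemma ps_pow_Suc: "ps_pow c (Suc k) = ps_mult c (ps_pow c k)"
  by (simp add: ps_pow_def)

lemma ps_mult_nonzeroE:
  assumes "ps_mult c d m \<noteq> 0"
  obtains a b where "a + b = m" "c a \<noteq> 0" "d b \<noteq> 0"
proof -
  from assms obtain ab where "ab \<in> {(a, b). a + b = m}" "(\<lambda>(a, b). c a * d b) ab \<noteq> 0"
    unfolding ps_mult_def by (meson sum.not_neutral_contains_not_neutral)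
  then obtain a b where "a + b = m" "c a * d b \<noteq> 0" by auto
  then show ?thesis using that by (metis mult_zero_left mult_zero_right)
qed

lemma keys_ps_mult_nonzero:
  assumes "ps_mult c d m \<noteq> 0"
  obtains a b where "c a \<noteq> 0" "d b \<noteq> 0" "Poly_Mapping.keys m \<subseteq> Poly_Mapping.keys a \<union> Poly_Mapping.keys b"
    "\<And>i. Poly_Mapping.lookup m i = Poly_Mapping.lookup a i + Poly_Mapping.lookup b i"
proof -
  from assms obtain a b where "a + b = m" "c a \<noteq> 0" "d b \<noteq> 0" by (rule ps_mult_nonzeroE)
  then show ?thesis using that keys_add[of a b] by (auto simp: lookup_add)
qed

definition finitely_supported :: "'a::zero pser \<Rightarrow> bool" where
  "finitely_supported c \<longleftrightarrow> finite {m. c m \<noteq> 0}"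

lemma finitely_supported_ps_one: "finitely_supported (ps_one :: 'a::comm_ring_1 pser)"
proof -
  have "{m. (ps_one :: 'a pser) m \<noteq> 0} \<subseteq> {0}" by (auto simp: ps_one_def)
  then show ?thesis unfolding finitely_supported_def using finite_subset by blast
qed

lemma finitely_supported_ps_var: "finitely_supported (ps_var j :: 'a::comm_ring_1 pser)"
proof -
  have "{m. (ps_var j :: 'a pser) m \<noteq> 0} \<subseteq> {Poly_Mapping.single j 1}" by (auto simp: ps_var_def)
  then show ?thesis unfolding finitely_supported_def using finite_subset by blast
qed

lemma finitely_supported_ps_smul: "finitely_supported c \<Longrightarrow> finitely_supported (ps_smul a c)"
  unfolding finitely_supported_def ps_smul_def by (rule finite_subset[rotated]) auto

lemma finitely_supported_ps_add:
  "finitely_supported c \<Longrightarrow> finitely_supported d \<Longrightarrow> finitely_supported (ps_add c d)"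
  unfolding finitely_supported_def ps_add_def
  by (rule finite_subset[of _ "{m. c m \<noteq> 0} \<union> {m. d m \<noteq> 0}"]) auto

lemma finitely_supported_ps_mult:
  assumes "finitely_supported c" "finitely_supported d"
  shows "finitely_supported (ps_mult c d)"
proof -
  have "{m. ps_mult c d m \<noteq> 0} \<subseteq> (\<lambda>(a, b). a + b) ` ({m. c m \<noteq> 0} \<times> {m. d m \<noteq> 0})"
    by (force elim: ps_mult_nonzeroE)
  then show ?thesis using assms unfolding finitely_supported_def
    by (meson finite_SigmaI finite_imageI finite_subset)
qed

lemma finitely_supported_ps_pow: "finitely_supported c \<Longrightarrow> finitely_supported (ps_pow c k)"
  by (induction k) (simp_all add: ps_pow_Suc finitely_supported_ps_one finitely_supported_ps_mult)

lemma in_vars_ps_mult: "in_vars N c \<Longrightarrow> in_vars N d \<Longrightarrow> in_vars N (ps_mult c d)"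
  unfolding in_vars_def by (blast elim: keys_ps_mult_nonzero)

lemma in_vars_ps_pow:
  assumes "in_vars N c" shows "in_vars N (ps_pow c k)"
proof (induction k)
  case 0 show ?case by (simp add: in_vars_def ps_one_def)
next
  case (Suc k) then show ?case unfolding ps_pow_Suc by (rule in_vars_ps_mult[OF assms])
qed

definition frob_prod :: "nat \<Rightarrow> (nat \<Rightarrow> nat) \<Rightarrow> nat list \<Rightarrow> 'a::comm_ring_1 pser" where
  "frob_prod p e L = foldr (\<lambda>j acc. ps_mult (ps_pow (frob_var p j) (e j)) acc) L ps_one"

lemma frob_prod_Cons: "frob_prod p e (j # L) = ps_mult (ps_pow (frob_var p j) (e j)) (frob_prod p e L)"
  unfolding frob_prod_def by simp

lemma frob_mono_eq_frob_prod:
  "frob_mono p m = frob_prod p (Poly_Mapping.lookup m) (sorted_list_of_set (Poly_Mapping.keys m))"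
  unfolding frob_mono_def frob_prod_def ..

lemma finitely_supported_frob_var: "finitely_supported (frob_var p j :: 'a::comm_ring_1 pser)"
  unfolding frob_var_def
  by (intro finitely_supported_ps_add finitely_supported_ps_pow finitely_supported_ps_smul
      finitely_supported_ps_var)

lemma finitely_supported_frob_prod: "finitely_supported (frob_prod p e L :: 'a::comm_ring_1 pser)"
  by (induction L) (auto simp: frob_prod_def finitely_supported_ps_one finitely_supported_ps_mult
      finitely_supported_ps_pow finitely_supported_frob_var)

lemma finitely_supported_frob_mono: "finitely_supported (frob_mono p m :: 'a::comm_ring_1 pser)"
  unfolding frob_mono_eq_frob_prod by (rule finitely_supported_frob_prod)

lemma ps_pow_var_nonzero:
  "(ps_pow (ps_var j) k :: 'a::comm_ring_1 pser) n \<noteq> 0 \<Longrightarrow> n = Poly_Mapping.single j k"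
proof (induction k arbitrary: n)
  case 0 then show ?case by (simp add: ps_one_def split: if_splits)
next
  case (Suc k)
  then obtain a b where "a + b = n" "(ps_var j :: 'a pser) a \<noteq> 0" "ps_pow (ps_var j) k b \<noteq> (0::'a)"
    by (auto simp: ps_pow_Suc elim: ps_mult_nonzeroE)
  then have "a = Poly_Mapping.single j 1" "b = Poly_Mapping.single j k"
    using Suc.IH by (auto simp: ps_var_def split: if_splits)
  then show ?case using \<open>a + b = n\<close> by (simp add: single_add[symmetric])
qed

text \<open>These bounds show that only finitely many monomials of \<open>g\<close> contribute to a coefficient of
  \<open>\<phi>(g)\<close>, so the sum in the definition of \<open>ps_phi\<close> ranges over a finite set.\<close>

lemma ps_pow_frob_var_nonzero:
  assumes "(ps_pow (frob_var p j) k :: 'a::comm_ring_1 pser) n \<noteq> 0" "p > 0"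
  shows "k \<le> Poly_Mapping.lookup n j + Poly_Mapping.lookup n (Suc j) \<and> Poly_Mapping.keys n \<subseteq> {j, Suc j}"
  using assms(1)
proof (induction k arbitrary: n)
  case 0 then show ?case by (simp add: ps_one_def split: if_splits)
next
  case (Suc k)
  obtain a b where ab: "(frob_var p j :: 'a pser) a \<noteq> 0" "ps_pow (frob_var p j) k b \<noteq> (0::'a)"
    "Poly_Mapping.keys n \<subseteq> Poly_Mapping.keys a \<union> Poly_Mapping.keys b"
    "\<And>i. Poly_Mapping.lookup n i = Poly_Mapping.lookup a i + Poly_Mapping.lookup b i"
    using keys_ps_mult_nonzero[OF Suc.prems[unfolded ps_pow_Suc]] by blast
  from ab(1) have "a = Poly_Mapping.single j p \<or> a = Poly_Mapping.single (Suc j) 1"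
    using ps_pow_var_nonzero[of j p a]
    by (auto simp: frob_var_def ps_add_def ps_smul_def ps_var_def split: if_splits)
  then have "1 \<le> Poly_Mapping.lookup a j + Poly_Mapping.lookup a (Suc j) \<and> Poly_Mapping.keys a \<subseteq> {j, Suc j}"
    using assms(2) by (auto simp: lookup_single)
  then show ?case using Suc.IH[OF ab(2)] ab(3,4) by auto
qed

lemma frob_prod_nonzero:
  assumes "(frob_prod p e L :: 'a::comm_ring_1 pser) n \<noteq> 0" "p > 0"
  shows "(\<forall>i\<in>set L. e i \<le> Poly_Mapping.lookup n i + Poly_Mapping.lookup n (Suc i)) \<and>
    Poly_Mapping.keys n \<subseteq> (\<Union>j\<in>set L. {j, Suc j})"
  using assms(1)
proof (induction L arbitrary: n)
  case Nil then show ?case by (simp add: frob_prod_def ps_one_def split: if_splits)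
next
  case (Cons j L)
  obtain a b where ab: "(ps_pow (frob_var p j) (e j) :: 'a pser) a \<noteq> 0"
    "(frob_prod p e L :: 'a pser) b \<noteq> 0"
    "Poly_Mapping.keys n \<subseteq> Poly_Mapping.keys a \<union> Poly_Mapping.keys b"
    "\<And>i. Poly_Mapping.lookup n i = Poly_Mapping.lookup a i + Poly_Mapping.lookup b i"
    using keys_ps_mult_nonzero[OF Cons.prems[unfolded frob_prod_Cons]] by blast
  note IH = Cons.IH[OF ab(2)] and hd = ps_pow_frob_var_nonzero[OF ab(1) assms(2)]
  have "e i \<le> Poly_Mapping.lookup n i + Poly_Mapping.lookup n (Suc i)" if "i \<in> set (j # L)" for i
    using that IH hd ab(4)[of i] ab(4)[of "Suc i"] by (cases "i = j") fastforce+
  moreover have "Poly_Mapping.keys n \<subseteq> (\<Union>j\<in>set (j # L). {j, Suc j})" using ab(3) IH hd by auto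
  ultimately show ?case by blast
qed

lemma frob_mono_nonzero:
  assumes "(frob_mono p m :: 'a::comm_ring_1 pser) n \<noteq> 0" "p > 0"
  shows "(\<forall>i. Poly_Mapping.lookup m i \<le> Poly_Mapping.lookup n i + Poly_Mapping.lookup n (Suc i)) \<and>
    Poly_Mapping.keys n \<subseteq> (\<Union>j\<in>Poly_Mapping.keys m. {j, Suc j})"
proof -
  have "(\<forall>i\<in>Poly_Mapping.keys m. Poly_Mapping.lookup m i \<le> Poly_Mapping.lookup n i + Poly_Mapping.lookup n (Suc i)) \<and>
    Poly_Mapping.keys n \<subseteq> (\<Union>j\<in>Poly_Mapping.keys m. {j, Suc j})"
    using frob_prod_nonzero[OF assms[unfolded frob_mono_eq_frob_prod]] by simp
  moreover have "Poly_Mapping.lookup m i = 0" if "i \<notin> Poly_Mapping.keys m" for i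
    using that by (simp add: in_keys_iff)
  ultimately show ?thesis by (metis le0)
qed

lemma finite_frob_mono_sources:
  assumes "p > 0"
  shows "finite {m. (frob_mono p m :: 'a::comm_ring_1 pser) n \<noteq> 0}"
proof -
  let ?K = "Poly_Mapping.keys n \<union> Suc -` Poly_Mapping.keys n"
  let ?B = "\<lambda>i. Poly_Mapping.lookup n i + Poly_Mapping.lookup n (Suc i)"
  have "{m. (frob_mono p m :: 'a pser) n \<noteq> 0} \<subseteq>
      {a. Poly_Mapping.keys a \<subseteq> ?K \<and> (\<forall>i\<in>?K. Poly_Mapping.lookup a i \<le> ?B i)}"
  proof
    fix m assume "m \<in> {m. (frob_mono p m :: 'a pser) n \<noteq> 0}"
    then have bound: "Poly_Mapping.lookup m i \<le> ?B i" for i using frob_mono_nonzero assms by blast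
    moreover have "Poly_Mapping.keys m \<subseteq> ?K"
    proof
      fix i assume "i \<in> Poly_Mapping.keys m"
      then have "Poly_Mapping.lookup m i \<noteq> 0" by (simp add: in_keys_iff)
      then have "?B i \<noteq> 0" using bound[of i] by linarith
      then show "i \<in> ?K" by (auto simp: in_keys_iff)
    qed
    ultimately show "m \<in> {a. Poly_Mapping.keys a \<subseteq> ?K \<and> (\<forall>i\<in>?K. Poly_Mapping.lookup a i \<le> ?B i)}"
      by blast
  qed
  moreover have "finite ?K" by (intro finite_UnI finite_keys finite_vimageI) simp_all
  ultimately show ?thesis using finite_bounded_poly_mappings[of ?K ?B] finite_subset by blast
qed

lemma add_power_prime_eq:
  fixes a b :: "'r::comm_ring_1"
  assumes "prime p"
  obtains c where "(a + b) ^ p = a ^ p + b ^ p + of_nat p * c"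
proof -
  have p1: "p \<ge> 1" using assms prime_ge_1_nat by blast
  define f where "f k = of_nat (p choose k) * a ^ k * b ^ (p - k)" for k
  define c where "c = (\<Sum>k\<in>{1..<p}. of_nat ((p choose k) div p) * a ^ k * b ^ (p - k))"
  have "(a + b) ^ p = (\<Sum>k\<in>insert 0 (insert p {1..<p}). f k)"
    unfolding f_def binomial_ring using p1 by (intro sum.cong) auto
  also have "\<dots> = f 0 + f p + (\<Sum>k\<in>{1..<p}. f k)"
    using p1 by (simp add: sum.insert add.assoc)
  also have "(\<Sum>k\<in>{1..<p}. f k) = of_nat p * c"
    unfolding c_def sum_distrib_left
  proof (rule sum.cong[OF refl])
    fix k assume "k \<in> {1..<p}"
    then have "p choose k = p * ((p choose k) div p)" using assms by (simp add: dvd_choose_prime)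
    then show "f k = of_nat p * (of_nat ((p choose k) div p) * a ^ k * b ^ (p - k))"
      unfolding f_def by (metis (no_types) mult.assoc of_nat_mult)
  qed
  finally show ?thesis using that by (simp add: f_def algebra_simps)
qed

text \<open>Coefficient functions of finite support are the elements of the monoid ring
  \<open>(nat \<Rightarrow>\<^sub>0 nat) \<Rightarrow>\<^sub>0 'a\<close>, where \<open>ps_mult\<close> is ordinary multiplication.\<close>

lemma ps_mult_lookup:
  fixes A B :: "(nat \<Rightarrow>\<^sub>0 nat) \<Rightarrow>\<^sub>0 'a::comm_ring_1"
  shows "ps_mult (Poly_Mapping.lookup A) (Poly_Mapping.lookup B) = Poly_Mapping.lookup (A * B)"
proof
  fix k
  have fA: "finite {a. Poly_Mapping.lookup A a \<noteq> 0}" and fB: "finite {a. Poly_Mapping.lookup B a \<noteq> 0}"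
    using finite_keys[of A] finite_keys[of B] by (simp_all add: keys.rep_eq)
  have "Poly_Mapping.lookup (A * B) k = prod_fun (Poly_Mapping.lookup A) (Poly_Mapping.lookup B) k"
    by (simp add: times_poly_mapping.rep_eq)
  also have "\<dots> = (\<Sum>(a, b). Poly_Mapping.lookup A a * Poly_Mapping.lookup B b when k = a + b)"
    by (rule prod_fun_unfold_prod[OF fA fB])
  also have "\<dots> = (\<Sum>ab\<in>{(a, b). a + b = k}.
      (\<lambda>(a, b). Poly_Mapping.lookup A a * Poly_Mapping.lookup B b when k = a + b) ab)"
    by (rule Sum_any.expand_superset)
      (auto simp: finite_additive_decompositions when_def split: if_splits)
  also have "\<dots> = ps_mult (Poly_Mapping.lookup A) (Poly_Mapping.lookup B) k"
    unfolding ps_mult_def by (intro sum.cong) (auto simp: when_def)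
  finally show "ps_mult (Poly_Mapping.lookup A) (Poly_Mapping.lookup B) k = Poly_Mapping.lookup (A * B) k"
    by simp
qed

lemma ps_pow_lookup:
  fixes A :: "(nat \<Rightarrow>\<^sub>0 nat) \<Rightarrow>\<^sub>0 'a::comm_ring_1"
  shows "ps_pow (Poly_Mapping.lookup A) k = Poly_Mapping.lookup (A ^ k)"
  by (induction k) (auto simp: ps_one_def lookup_one when_def ps_pow_Suc ps_mult_lookup)

lemma single_power:
  "(Poly_Mapping.single t v :: (nat \<Rightarrow>\<^sub>0 nat) \<Rightarrow>\<^sub>0 'a::comm_ring_1) ^ k = Poly_Mapping.single (pm_scale k t) (v ^ k)"
proof (induction k)
  case (Suc k) then show ?case by (simp only: power_Suc mult_single pm_scale_Suc)
qed simp

lemma lookup_of_nat_mult: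
  "Poly_Mapping.lookup (of_nat n * (Z :: (nat \<Rightarrow>\<^sub>0 nat) \<Rightarrow>\<^sub>0 'a::comm_ring_1)) k = of_nat n * Poly_Mapping.lookup Z k"
proof -
  have "of_nat n * Z = Poly_Mapping.map ((*) (of_nat n)) Z"
    by (simp add: mult_map_scale_conv_mult)
  then show ?thesis by (simp add: lookup_map_pm)
qed

text \<open>Induction on the support, splitting off one monomial with the binomial congruence.\<close>

lemma ps_pow_prime_cong_finite:
  fixes g :: "'a::comm_ring_1 pser"
  assumes "prime p" "finite T" "{m. g m \<noteq> 0} \<subseteq> T"
  shows "of_nat p dvd ps_pow g p n - pow_subst p (\<lambda>m. g m ^ p) n"
  using assms(2,3)
proof (induction T arbitrary: g rule: finite_induct)
  case empty
  have p_pos: "p > 0" using assms(1) prime_gt_0_nat by blast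
  have "g = (\<lambda>_. 0)" using empty by auto
  moreover have "ps_pow (\<lambda>_. 0 :: 'a) p n = 0"
    using p_pos by (cases p) (simp_all add: ps_pow_Suc ps_mult_def)
  moreover have "pow_subst p (\<lambda>m. (0::'a) ^ p) n = 0" using p_pos by (simp add: pow_subst_def zero_power)
  ultimately show ?case by simp
next
  case (insert t T)
  have p_pos: "p > 0" using assms(1) prime_gt_0_nat by blast
  define g' where "g' = g(t := 0)"
  have sub': "{m. g' m \<noteq> 0} \<subseteq> T" using insert.prems unfolding g'_def by auto
  then have IH: "of_nat p dvd ps_pow g' p n - pow_subst p (\<lambda>m. g' m ^ p) n" by (rule insert.IH)
  define G' where "G' = Abs_poly_mapping g'"
  have lookup_G': "Poly_Mapping.lookup G' = g'"
    unfolding G'_def using sub' insert.hyps(1) finite_subset by (blast intro: Abs_poly_mapping_inverse)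
  define s where "s = Poly_Mapping.single t (g t)"
  have g_eq: "g = Poly_Mapping.lookup (G' + s)"
    by (rule ext) (simp add: lookup_add lookup_G' s_def lookup_single when_def g'_def)
  obtain C where C: "(G' + s) ^ p = G' ^ p + s ^ p + of_nat p * C"
    using add_power_prime_eq[OF assms(1)] by blast
  have "Poly_Mapping.lookup G' t = 0" by (simp add: lookup_G' g'_def)
  then have "ps_pow g p n = ps_pow g' p n + (g t ^ p when pm_scale p t = n) + of_nat p * Poly_Mapping.lookup C n"
    unfolding g_eq ps_pow_lookup C lookup_G'[symmetric]
    by (simp add: lookup_add lookup_of_nat_mult s_def single_power lookup_single)
  moreover have "pow_subst p (\<lambda>m. g m ^ p) n = pow_subst p (\<lambda>m. g' m ^ p) n + (g t ^ p when pm_scale p t = n)"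
  proof (cases "n \<in> range (pm_scale p)")
    case True
    then obtain m0 where "n = pm_scale p m0" by blast
    then show ?thesis using p_pos
      by (cases "m0 = t") (auto simp: g'_def when_def pm_scale_eq_iff pow_subst_pm_scale zero_power)
  qed (auto simp: when_def pow_subst_outside_range)
  ultimately have "ps_pow g p n - pow_subst p (\<lambda>m. g m ^ p) n =
      (ps_pow g' p n - pow_subst p (\<lambda>m. g' m ^ p) n) + of_nat p * Poly_Mapping.lookup C n"
    by (simp add: algebra_simps)
  then show ?case using IH by simp
qed

lemma ps_pow_truncate:
  fixes g :: "'a::comm_ring_1 pser"
  assumes "n' \<in> {x. \<exists>y. x + y = n}"
  shows "ps_pow g k n' = ps_pow (\<lambda>m. if m \<in> {x. \<exists>y. x + y = n} then g m else 0) k n'"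
  using assms
proof (induction k arbitrary: n')
  case (Suc k)
  have summands: "a \<in> {x. \<exists>y. x + y = n}" "b \<in> {x. \<exists>y. x + y = n}" if "a + b = n'" for a b
    using Suc.prems that by (auto simp: add.assoc) (metis add.assoc add.commute)
  show ?case unfolding ps_pow_Suc ps_mult_def
    by (rule sum.cong[OF refl]) (use summands Suc.IH in auto)
qed simp

lemma ps_pow_prime_cong:
  fixes g :: "'a::comm_ring_1 pser"
  assumes "prime p"
  shows "of_nat p dvd ps_pow g p n - pow_subst p (\<lambda>m. g m ^ p) n"
proof -
  let ?D = "{x. \<exists>y. x + y = n}"
  define g' where "g' = (\<lambda>m. if m \<in> ?D then g m else 0)"
  have p_pos: "p > 0" using assms prime_gt_0_nat by blast
  have "ps_pow g p n = ps_pow g' p n"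
    unfolding g'_def by (rule ps_pow_truncate) (metis (mono_tags) add_0_right mem_Collect_eq)
  moreover have "pow_subst p (\<lambda>m. g m ^ p) n = pow_subst p (\<lambda>m. g' m ^ p) n"
  proof (cases "n \<in> range (pm_scale p)")
    case True
    then obtain m0 where n: "n = pm_scale p m0" by blast
    have "m0 + pm_scale (p - 1) m0 = n"
      unfolding n pm_scale_Suc using p_pos by simp
    then have "m0 \<in> ?D" by blast
    then show ?thesis using n p_pos by (simp add: g'_def pow_subst_pm_scale)
  qed (simp add: pow_subst_outside_range)
  moreover have "{m. g' m \<noteq> 0} \<subseteq> {x. \<exists>y. x + y = n}" unfolding g'_def by auto
  ultimately show ?thesis using ps_pow_prime_cong_finite[OF assms finite_summands] by simp
qed

lemma dvd_mult_diff_mult: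
  fixes a a' b b' q :: "'r::comm_ring_1"
  assumes "q dvd a - a'" "q dvd b - b'"
  shows "q dvd a * b - a' * b'"
proof -
  have "a * b - a' * b' = (a - a') * b + a' * (b - b')" by (simp add: algebra_simps)
  then show ?thesis using assms by simp
qed

definition ps_monom :: "(nat \<Rightarrow>\<^sub>0 nat) \<Rightarrow> 'a::comm_ring_1 pser" where
  "ps_monom a = (\<lambda>n. if n = a then 1 else 0)"

lemma ps_mult_monom: "ps_mult (ps_monom a) (ps_monom b) = ps_monom (a + b)"
proof
  fix n
  have "ps_mult (ps_monom a) (ps_monom b) n = (\<Sum>xy\<in>{(x, y). x + y = n}. if (a, b) = xy then 1 else 0)"
    unfolding ps_mult_def ps_monom_def by (intro sum.cong) (auto split: if_splits)
  also have "\<dots> = (if (a, b) \<in> {(x, y). x + y = n} then 1 else 0)"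
    by (rule sum.delta'[OF finite_additive_decompositions])
  finally show "ps_mult (ps_monom a) (ps_monom b) n = ps_monom (a + b) n" by (auto simp: ps_monom_def)
qed

lemma ps_pow_monom: "ps_pow (ps_monom a) k = ps_monom (pm_scale k a)"
proof (induction k)
  case 0 show ?case by (simp add: ps_monom_def ps_one_def)
next
  case (Suc k) then show ?case by (simp only: ps_pow_Suc ps_mult_monom pm_scale_Suc)
qed

lemma ps_var_eq_monom: "ps_var j = ps_monom (Poly_Mapping.single j 1)"
  unfolding ps_var_def ps_monom_def ..

definition ps_cong_p :: "nat \<Rightarrow> 'a::comm_ring_1 pser \<Rightarrow> 'a pser \<Rightarrow> bool" where
  "ps_cong_p p c d \<longleftrightarrow> (\<forall>n. of_nat p dvd c n - d n)"

lemma ps_cong_p_refl: "ps_cong_p p c c"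
  unfolding ps_cong_p_def by simp

lemma ps_cong_p_mult:
  assumes "ps_cong_p p c c'" "ps_cong_p p d d'"
  shows "ps_cong_p p (ps_mult c d) (ps_mult c' d')"
  unfolding ps_cong_p_def
proof
  fix n
  show "of_nat p dvd ps_mult c d n - ps_mult c' d' n"
    using assms unfolding ps_mult_def ps_cong_p_def sum_subtractf[symmetric]
    by (intro dvd_sum) (auto intro: dvd_mult_diff_mult)
qed

lemma ps_cong_p_pow: "ps_cong_p p c c' \<Longrightarrow> ps_cong_p p (ps_pow c k) (ps_pow c' k)"
  by (induction k) (simp_all add: ps_pow_Suc ps_cong_p_mult ps_cong_p_refl)

lemma ps_cong_p_frob_var: "ps_cong_p p (frob_var p j) (ps_monom (Poly_Mapping.single j p))"
  by (simp add: ps_cong_p_def frob_var_def ps_add_def ps_smul_def ps_var_eq_monom ps_pow_monom)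

lemma ps_cong_p_frob_prod:
  assumes "distinct L"
  shows "ps_cong_p p (frob_prod p e L)
    (ps_monom (Poly_Mapping.Abs_poly_mapping (\<lambda>i. if i \<in> set L then p * e i else 0)))"
  using assms
proof (induction L)
  case Nil
  show ?case
    by (simp add: frob_prod_def ps_cong_p_def ps_one_def ps_monom_def flip: zero_poly_mapping.abs_eq)
next
  case (Cons j L)
  let ?a = "\<lambda>L. Poly_Mapping.Abs_poly_mapping (\<lambda>i. if i \<in> set L then p * e i else 0)"
  have "ps_cong_p p (ps_pow (frob_var p j) (e j)) (ps_monom (Poly_Mapping.single j (e j * p)) :: 'a pser)"
    using ps_cong_p_pow[OF ps_cong_p_frob_var[of p j], where k="e j"] by (simp add: ps_pow_monom)
  moreover have "ps_cong_p p (frob_prod p e L) (ps_monom (?a L) :: 'a pser)"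
    using Cons by simp
  ultimately have "ps_cong_p p (frob_prod p e (j # L)) (ps_monom (Poly_Mapping.single j (e j * p) + ?a L) :: 'a pser)"
    unfolding frob_prod_Cons ps_mult_monom[symmetric] by (rule ps_cong_p_mult)
  moreover have "Poly_Mapping.single j (e j * p) + ?a L = ?a (j # L)"
    using Cons.prems
    by (intro poly_mapping_eqI) (auto simp: lookup_add lookup_single when_def Abs_poly_mapping_inverse)
  ultimately show ?case by simp
qed

lemma ps_cong_p_frob_mono: "ps_cong_p p (frob_mono p m) (ps_monom (pm_scale p m))"
proof -
  have "Poly_Mapping.Abs_poly_mapping
      (\<lambda>i. if i \<in> set (sorted_list_of_set (Poly_Mapping.keys m)) then p * Poly_Mapping.lookup m i else 0)
    = pm_scale p m"
    by (intro poly_mapping_eqI) (auto simp: lookup_pm_scale in_keys_iff Abs_poly_mapping_inverse)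
  then show ?thesis
    using ps_cong_p_frob_prod[of "sorted_list_of_set (Poly_Mapping.keys m)" p "Poly_Mapping.lookup m"]
    unfolding frob_mono_eq_frob_prod by simp
qed

definition nondvd_support :: "nat \<Rightarrow> nat \<Rightarrow> 'a::comm_ring_1 pser \<Rightarrow> (nat \<Rightarrow>\<^sub>0 nat) set" where
  "nondvd_support p n c = {m. \<not> of_nat p ^ n dvd c m}"

lemma restricted_iff_finite_nondvd_support:
  "restricted p c \<longleftrightarrow> (\<forall>n. finite (nondvd_support p n c))"
  unfolding restricted_def nondvd_support_def ..

lemma finite_nondvd_support: "restricted p c \<Longrightarrow> finite (nondvd_support p n c)"
  unfolding restricted_iff_finite_nondvd_support by blast

lemma nondvd_support_mono: "n \<le> n' \<Longrightarrow> nondvd_support p n c \<subseteq> nondvd_support p n' c"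
  unfolding nondvd_support_def using le_imp_power_dvd dvd_trans by blast

lemma dvd_outside_nondvd_support: "m \<notin> nondvd_support p n c \<Longrightarrow> of_nat p ^ n dvd c m"
  unfolding nondvd_support_def by simp

lemma restricted_if_finitely_supported: "finitely_supported c \<Longrightarrow> restricted p c"
  unfolding restricted_def finitely_supported_def by (auto elim!: finite_subset[rotated])

lemma dvd_sum_diff_if_dvd_symdiff:
  fixes t :: "'b \<Rightarrow> 'a::comm_ring_1"
  assumes "finite A" "finite B" "\<And>m. m \<in> (A - B) \<union> (B - A) \<Longrightarrow> q dvd t m"
  shows "q dvd sum t A - sum t B"
proof -
  have "sum t A = sum t (A \<inter> B) + sum t (A - B)" "sum t B = sum t (A \<inter> B) + sum t (B - A)"
    using assms by (simp_all add: sum.Int_Diff) (metis inf_commute sum.Int_Diff)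
  moreover have "q dvd sum t (A - B)" "q dvd sum t (B - A)" using assms by (auto intro: dvd_sum)
  ultimately show ?thesis by (simp add: dvd_diff)
qed

lemma partial_sums_cong:
  assumes "finite A" "finite B" "nondvd_support p n c \<subseteq> A" "nondvd_support p n c \<subseteq> B"
  shows "of_nat p ^ n dvd (\<Sum>m\<in>A. c m * g m) - (\<Sum>m\<in>B. c m * g m)"
proof (rule dvd_sum_diff_if_dvd_symdiff)
  fix m assume "m \<in> (A - B) \<union> (B - A)"
  then have "m \<notin> nondvd_support p n c" using assms by auto
  then show "of_nat p ^ n dvd c m * g m" by (simp add: dvd_outside_nondvd_support)
qed (use assms in auto)

lemma ps_mult_coeff_approx:
  fixes c d :: "'a::comm_ring_1 pser"
  assumes "finite A" "finite B" "nondvd_support p n c \<subseteq> A" "nondvd_support p n d \<subseteq> B"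
  shows "of_nat p ^ n dvd ps_mult c d m - (\<Sum>(a, b)\<in>{(a, b) \<in> A \<times> B. a + b = m}. c a * d b)"
  unfolding ps_mult_def
proof (rule dvd_sum_diff_if_dvd_symdiff)
  show "finite {(a, b). a + b = m}" by (rule finite_additive_decompositions)
  show "finite {(a, b) \<in> A \<times> B. a + b = m}"
    by (rule finite_subset[of _ "A \<times> B"]) (use assms in auto)
  fix ab assume "ab \<in> ({(a, b). a + b = m} - {(a, b) \<in> A \<times> B. a + b = m}) \<union>
      ({(a, b) \<in> A \<times> B. a + b = m} - {(a, b). a + b = m})"
  then obtain a b where "ab = (a, b)" "a \<notin> A \<or> b \<notin> B" by auto
  then have "ab = (a, b)" "a \<notin> nondvd_support p n c \<or> b \<notin> nondvd_support p n d" using assms by auto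
  then show "of_nat p ^ n dvd (\<lambda>(a, b). c a * d b) ab"
    by (auto simp: dvd_outside_nondvd_support)
qed

lemma dvd_diff_diffE:
  fixes x y z q :: "'r::comm_ring_1"
  assumes "q dvd x - y - z"
  obtains r where "x = y + z + q * r"
proof -
  from assms obtain r where "x - y - z = q * r" by (auto elim: dvdE)
  then show ?thesis using that by (simp add: algebra_simps)
qed

lemma power_add_mult_cong:
  fixes a e q :: "'r::comm_ring_1"
  shows "q ^ 2 dvd (a + q * e) ^ k - a ^ k - q * (of_nat k * a ^ (k - 1) * e)"
proof (induction k)
  case (Suc k)
  then obtain r where r: "(a + q * e) ^ k = a ^ k + q * (of_nat k * a ^ (k - 1) * e) + q ^ 2 * r"
    by (rule dvd_diff_diffE)
  have "a * (of_nat k * a ^ (k - 1)) = of_nat k * a ^ k"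
    by (cases k) simp_all
  then have "(a + q * e) ^ Suc k - a ^ Suc k - q * (of_nat (Suc k) * a ^ (Suc k - 1) * e)
      = q ^ 2 * (a * r + e * (of_nat k * a ^ (k - 1) * e) + q * e * r)"
    unfolding power_Suc r by (simp add: algebra_simps power2_eq_square)
  then show ?case by simp
qed simp

lemma prod_power_add_mult_cong:
  fixes a e :: "nat \<Rightarrow> 'r::comm_ring_1" and q :: 'r
  assumes "finite K"
  shows "q ^ 2 dvd (\<Prod>i\<in>K. (a i + q * e i) ^ k i) - (\<Prod>i\<in>K. a i ^ k i)
     - q * (\<Sum>j\<in>K. of_nat (k j) * a j ^ (k j - 1) * e j * (\<Prod>i\<in>K - {j}. a i ^ k i))"
  using assms
proof (induction K rule: finite_induct)
  case (insert j K)
  let ?A = "a j ^ k j" and ?B = "of_nat (k j) * a j ^ (k j - 1) * e j"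
  let ?A' = "\<Prod>i\<in>K. a i ^ k i"
  let ?B' = "\<Sum>j\<in>K. of_nat (k j) * a j ^ (k j - 1) * e j * (\<Prod>i\<in>K - {j}. a i ^ k i)"
  obtain r where r: "(a j + q * e j) ^ k j = ?A + q * ?B + q ^ 2 * r"
    using power_add_mult_cong[of q "a j" "e j" "k j"] by (rule dvd_diff_diffE)
  obtain r' where r': "(\<Prod>i\<in>K. (a i + q * e i) ^ k i) = ?A' + q * ?B' + q ^ 2 * r'"
    using insert.IH by (rule dvd_diff_diffE)
  have "(\<Sum>l\<in>K. of_nat (k l) * a l ^ (k l - 1) * e l * (\<Prod>i\<in>insert j K - {l}. a i ^ k i)) = ?A * ?B'"
    unfolding sum_distrib_left
  proof (rule sum.cong[OF refl])
    fix l assume "l \<in> K"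
    then have "insert j K - {l} = insert j (K - {l})" using insert.hyps by auto
    then show "of_nat (k l) * a l ^ (k l - 1) * e l * (\<Prod>i\<in>insert j K - {l}. a i ^ k i)
        = ?A * (of_nat (k l) * a l ^ (k l - 1) * e l * (\<Prod>i\<in>K - {l}. a i ^ k i))"
      using insert.hyps by (simp add: algebra_simps)
  qed
  moreover have "insert j K - {j} = K" using insert.hyps by auto
  ultimately have "(\<Sum>l\<in>insert j K. of_nat (k l) * a l ^ (k l - 1) * e l * (\<Prod>i\<in>insert j K - {l}. a i ^ k i))
      = ?B * ?A' + ?A * ?B'"
    using insert.hyps by simp
  moreover have "(?A + q * ?B + q ^ 2 * r) * (?A' + q * ?B' + q ^ 2 * r') - ?A * ?A' - q * (?B * ?A' + ?A * ?B')
     = q ^ 2 * (?B * ?B' + r * (?A' + q * ?B' + q ^ 2 * r') + (?A + q * ?B) * r')"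
    by (simp add: algebra_simps power2_eq_square)
  ultimately show ?case using insert.hyps r r' by simp
qed simp

text \<open>The value at \<open>a\<close> of the partial derivative of the monomial \<open>m\<close> with respect to \<open>y\<^sup>(\<^sup>j\<^sup>)\<close>
  (truncated subtraction makes \<open>m - y\<^sup>(\<^sup>j\<^sup>)\<close> harmless when \<open>y\<^sup>(\<^sup>j\<^sup>)\<close> does not occur in \<open>m\<close>).\<close>

definition mono_deriv_eval :: "nat \<Rightarrow> (nat \<Rightarrow> 'a::comm_ring_1) \<Rightarrow> (nat \<Rightarrow>\<^sub>0 nat) \<Rightarrow> 'a" where
  "mono_deriv_eval j a m = of_nat (Poly_Mapping.lookup m j) * mono_eval a (m - Poly_Mapping.single j 1)"

lemma mono_deriv_eval_outside_keys: "j \<notin> Poly_Mapping.keys m \<Longrightarrow> mono_deriv_eval j a m = 0"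
  by (simp add: mono_deriv_eval_def in_keys_iff)

lemma mono_deriv_eval_add_single:
  "mono_deriv_eval j a (m + Poly_Mapping.single j 1) = of_nat (Suc (Poly_Mapping.lookup m j)) * mono_eval a m"
  by (simp add: mono_deriv_eval_def lookup_add)

lemma mono_deriv_eval_eq_prod:
  assumes "j \<in> Poly_Mapping.keys m"
  shows "mono_deriv_eval j a m = of_nat (Poly_Mapping.lookup m j) * a j ^ (Poly_Mapping.lookup m j - 1)
    * (\<Prod>i\<in>Poly_Mapping.keys m - {j}. a i ^ Poly_Mapping.lookup m i)"
proof -
  let ?m' = "m - Poly_Mapping.single j 1"
  have keys: "Poly_Mapping.keys ?m' \<subseteq> Poly_Mapping.keys m"
    by (auto simp: in_keys_iff lookup_minus)
  have "mono_eval a ?m' = (\<Prod>i\<in>Poly_Mapping.keys m. a i ^ Poly_Mapping.lookup ?m' i)"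
    by (rule mono_eval_superset[OF finite_keys keys])
  also have "\<dots> = a j ^ (Poly_Mapping.lookup m j - 1) * (\<Prod>i\<in>Poly_Mapping.keys m - {j}. a i ^ Poly_Mapping.lookup m i)"
    using assms by (simp add: prod.remove lookup_minus lookup_single)
  finally show ?thesis unfolding mono_deriv_eval_def by (simp add: mult.assoc)
qed

lemma mono_eval_taylor:
  fixes a e :: "nat \<Rightarrow> 'r::comm_ring_1"
  assumes "Poly_Mapping.keys m \<subseteq> {..N}"
  shows "q ^ 2 dvd mono_eval (\<lambda>j. a j + q * e j) m - mono_eval a m - q * (\<Sum>j\<le>N. e j * mono_deriv_eval j a m)"
proof -
  have "(\<Sum>j\<le>N. e j * mono_deriv_eval j a m) = (\<Sum>j\<in>Poly_Mapping.keys m. e j * mono_deriv_eval j a m)"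
    using assms by (intro sum.mono_neutral_right) (auto simp: mono_deriv_eval_outside_keys)
  also have "\<dots> = (\<Sum>j\<in>Poly_Mapping.keys m. of_nat (Poly_Mapping.lookup m j) * a j ^ (Poly_Mapping.lookup m j - 1)
      * e j * (\<Prod>i\<in>Poly_Mapping.keys m - {j}. a i ^ Poly_Mapping.lookup m i))"
    by (intro sum.cong) (simp_all add: mono_deriv_eval_eq_prod algebra_simps)
  finally show ?thesis
    using prod_power_add_mult_cong[OF finite_keys, of q a e "Poly_Mapping.lookup m" m]
    by (simp add: mono_eval_def)
qed

section \<open>Evaluation in a p-adically complete ring\<close>

locale p_adic_ring =
  fixes p :: nat
  assumes prime: "prime p"
    and torsion_free: "\<And>x::'a::comm_ring_1. of_nat p * x = 0 \<Longrightarrow> x = 0"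
    and separated: "\<And>x::'a. (\<And>n. of_nat p ^ n dvd x) \<Longrightarrow> x = 0"
    and complete: "\<And>s::nat \<Rightarrow> 'a. (\<And>n. of_nat p ^ n dvd s (Suc n) - s n) \<Longrightarrow>
      \<exists>l. \<forall>n. of_nat p ^ n dvd l - s n"
begin

abbreviation P :: 'a where "P \<equiv> of_nat p"

lemma p_pos: "p > 0"
  using prime prime_gt_0_nat by blast

lemma mult_p_cancel: "P * a = P * b \<Longrightarrow> a = b"
  using torsion_free[of "a - b"] by (simp add: right_diff_distrib)

lemma p_pow_Suc_dvd_mult_p_cancel: "P ^ Suc n dvd P * z \<Longrightarrow> P ^ n dvd z"
proof -
  assume "P ^ Suc n dvd P * z"
  then obtain w where "P * z = P * (P ^ n * w)" by (auto elim!: dvdE simp: mult.assoc)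
  then have "z = P ^ n * w" by (rule mult_p_cancel)
  then show ?thesis by simp
qed

lemma div_p_unique: "P * y = x \<Longrightarrow> div_p p x = y"
  unfolding div_p_def by (rule the_equality) (auto intro: mult_p_cancel)

lemma mult_div_p: "P dvd x \<Longrightarrow> P * div_p p x = x"
  by (auto elim!: dvdE simp: div_p_unique)

lemma div_p_0 [simp]: "div_p p (0::'a) = 0"
  by (rule div_p_unique) simp

text \<open>\<open>ps_eval\<close> is characterised by \<open>p\<close>-adic approximation through any finite superset of the
  \<open>p\<^sup>n\<close>-non-divisible support; completeness gives existence, separatedness uniqueness.\<close>

lemma ps_eval_approx:
  fixes c :: "'a pser"
  assumes "restricted p c" "finite G" "nondvd_support p n c \<subseteq> G"
  shows "P ^ n dvd ps_eval p c x - (\<Sum>m\<in>G. c m * mono_eval x m)"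
proof -
  have fin: "finite (nondvd_support p k c)" for k using assms(1) by (rule finite_nondvd_support)
  define s where "s k = (\<Sum>m\<in>nondvd_support p k c. c m * mono_eval x m)" for k
  have "P ^ k dvd s (Suc k) - s k" for k
    unfolding s_def using fin nondvd_support_mono[of k "Suc k" p c] by (intro partial_sums_cong) auto
  then obtain l where l: "\<And>k. P ^ k dvd l - s k" using complete by blast
  have close: "P ^ k dvd l - (\<Sum>m\<in>G. c m * mono_eval x m)"
    if "finite G" "nondvd_support p k c \<subseteq> G" for k G
  proof -
    have "P ^ k dvd s k - (\<Sum>m\<in>G. c m * mono_eval x m)"
      unfolding s_def using that fin by (intro partial_sums_cong) auto
    with l[of k] have "P ^ k dvd (l - s k) + (s k - (\<Sum>m\<in>G. c m * mono_eval x m))" by (rule dvd_add)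
    then show ?thesis by simp
  qed
  have "ps_eval p c x = l"
    unfolding ps_eval_def
  proof (rule the_equality)
    show "\<forall>n. \<exists>F. finite F \<and> (\<forall>G. finite G \<and> F \<subseteq> G \<longrightarrow> P ^ n dvd (l - (\<Sum>m\<in>G. c m * mono_eval x m)))"
      using close fin by blast
  next
    fix t assume t: "\<forall>n. \<exists>F. finite F \<and>
      (\<forall>G. finite G \<and> F \<subseteq> G \<longrightarrow> P ^ n dvd (t - (\<Sum>m\<in>G. c m * mono_eval x m)))"
    have "P ^ n dvd t - l" for n
    proof -
      obtain F where F: "finite F"
        "\<And>G. finite G \<and> F \<subseteq> G \<Longrightarrow> P ^ n dvd (t - (\<Sum>m\<in>G. c m * mono_eval x m))"
        using t by blast
      let ?G = "F \<union> nondvd_support p n c"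
      have "finite ?G" using F(1) fin by blast
      then have "P ^ n dvd t - (\<Sum>m\<in>?G. c m * mono_eval x m)" "P ^ n dvd l - (\<Sum>m\<in>?G. c m * mono_eval x m)"
        using F close[of ?G n] by auto
      from dvd_diff[OF this]
      have "P ^ n dvd (t - (\<Sum>m\<in>?G. c m * mono_eval x m)) - (l - (\<Sum>m\<in>?G. c m * mono_eval x m))" .
      then show ?thesis by simp
    qed
    then show "t = l" using separated[of "t - l"] by simp
  qed
  then show ?thesis using close assms by simp
qed

lemma ps_eval_eqI:
  fixes c :: "'a pser"
  assumes "\<And>n. \<exists>G. finite G \<and> nondvd_support p n c \<subseteq> G \<and> P ^ n dvd v - (\<Sum>m\<in>G. c m * mono_eval x m)"
  shows "ps_eval p c x = v" "restricted p c"
proof -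
  show r: "restricted p c"
    unfolding restricted_iff_finite_nondvd_support using assms finite_subset by blast
  have "P ^ n dvd ps_eval p c x - v" for n
  proof -
    obtain G where G: "finite G" "nondvd_support p n c \<subseteq> G" "P ^ n dvd v - (\<Sum>m\<in>G. c m * mono_eval x m)"
      using assms by blast
    have "P ^ n dvd (ps_eval p c x - (\<Sum>m\<in>G. c m * mono_eval x m)) - (v - (\<Sum>m\<in>G. c m * mono_eval x m))"
      using ps_eval_approx[OF r G(1,2)] G(3) by (rule dvd_diff)
    then show ?thesis by simp
  qed
  then show "ps_eval p c x = v" using separated[of "ps_eval p c x - v"] by simp
qed

lemma ps_eval_finite:
  fixes c :: "'a pser"
  assumes "finite K" "{m. c m \<noteq> 0} \<subseteq> K"
  shows "ps_eval p c x = (\<Sum>m\<in>K. c m * mono_eval x m)"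
proof (rule ps_eval_eqI)
  fix n show "\<exists>G. finite G \<and> nondvd_support p n c \<subseteq> G \<and>
      P ^ n dvd (\<Sum>m\<in>K. c m * mono_eval x m) - (\<Sum>m\<in>G. c m * mono_eval x m)"
    using assms by (intro exI[of _ K]) (auto simp: nondvd_support_def)
qed

lemma ps_eval_add:
  fixes c d :: "'a pser"
  assumes "restricted p c" "restricted p d"
  shows "ps_eval p (ps_add c d) x = ps_eval p c x + ps_eval p d x" "restricted p (ps_add c d)"
proof -
  have "\<exists>G. finite G \<and> nondvd_support p n (ps_add c d) \<subseteq> G \<and>
      P ^ n dvd ps_eval p c x + ps_eval p d x - (\<Sum>m\<in>G. ps_add c d m * mono_eval x m)" for n
  proof (intro exI conjI)
    let ?G = "nondvd_support p n c \<union> nondvd_support p n d"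
    show "finite ?G" using assms finite_nondvd_support by blast
    show "nondvd_support p n (ps_add c d) \<subseteq> ?G"
      unfolding nondvd_support_def ps_add_def by (auto intro: dvd_add)
    have "P ^ n dvd (ps_eval p c x - (\<Sum>m\<in>?G. c m * mono_eval x m)) + (ps_eval p d x - (\<Sum>m\<in>?G. d m * mono_eval x m))"
      using assms \<open>finite ?G\<close> by (intro dvd_add ps_eval_approx) auto
    then show "P ^ n dvd ps_eval p c x + ps_eval p d x - (\<Sum>m\<in>?G. ps_add c d m * mono_eval x m)"
      by (simp add: ps_add_def algebra_simps sum.distrib)
  qed
  then show "ps_eval p (ps_add c d) x = ps_eval p c x + ps_eval p d x" "restricted p (ps_add c d)"
    by (rule ps_eval_eqI)+
qed

lemma ps_eval_diff:
  fixes c d :: "'a pser"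
  assumes "restricted p c" "restricted p d"
  shows "ps_eval p (\<lambda>m. c m - d m) x = ps_eval p c x - ps_eval p d x" "restricted p (\<lambda>m. c m - d m)"
proof -
  have "\<exists>G. finite G \<and> nondvd_support p n (\<lambda>m. c m - d m) \<subseteq> G \<and>
      P ^ n dvd ps_eval p c x - ps_eval p d x - (\<Sum>m\<in>G. (c m - d m) * mono_eval x m)" for n
  proof (intro exI conjI)
    let ?G = "nondvd_support p n c \<union> nondvd_support p n d"
    show "finite ?G" using assms finite_nondvd_support by blast
    show "nondvd_support p n (\<lambda>m. c m - d m) \<subseteq> ?G"
      unfolding nondvd_support_def by (auto intro: dvd_diff)
    have "P ^ n dvd (ps_eval p c x - (\<Sum>m\<in>?G. c m * mono_eval x m)) - (ps_eval p d x - (\<Sum>m\<in>?G. d m * mono_eval x m))"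
      using assms \<open>finite ?G\<close> by (intro dvd_diff ps_eval_approx) auto
    then show "P ^ n dvd ps_eval p c x - ps_eval p d x - (\<Sum>m\<in>?G. (c m - d m) * mono_eval x m)"
      by (simp add: algebra_simps sum_subtractf)
  qed
  then show "ps_eval p (\<lambda>m. c m - d m) x = ps_eval p c x - ps_eval p d x" "restricted p (\<lambda>m. c m - d m)"
    by (rule ps_eval_eqI)+
qed

lemma ps_eval_smul:
  fixes c :: "'a pser"
  assumes "restricted p c"
  shows "ps_eval p (ps_smul a c) x = a * ps_eval p c x" "restricted p (ps_smul a c)"
proof -
  have "\<exists>G. finite G \<and> nondvd_support p n (ps_smul a c) \<subseteq> G \<and>
      P ^ n dvd a * ps_eval p c x - (\<Sum>m\<in>G. ps_smul a c m * mono_eval x m)" for n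
  proof (intro exI conjI)
    let ?G = "nondvd_support p n c"
    show "finite ?G" using assms finite_nondvd_support by blast
    show "nondvd_support p n (ps_smul a c) \<subseteq> ?G" unfolding nondvd_support_def ps_smul_def by auto
    have "P ^ n dvd a * (ps_eval p c x - (\<Sum>m\<in>?G. c m * mono_eval x m))"
      using assms \<open>finite ?G\<close> by (intro dvd_mult ps_eval_approx) auto
    then show "P ^ n dvd a * ps_eval p c x - (\<Sum>m\<in>?G. ps_smul a c m * mono_eval x m)"
      by (simp add: ps_smul_def algebra_simps sum_distrib_left)
  qed
  then show "ps_eval p (ps_smul a c) x = a * ps_eval p c x" "restricted p (ps_smul a c)"
    by (rule ps_eval_eqI)+
qed

lemma ps_eval_mult:
  fixes c d :: "'a pser"
  assumes "restricted p c" "restricted p d"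
  shows "ps_eval p (ps_mult c d) x = ps_eval p c x * ps_eval p d x" "restricted p (ps_mult c d)"
proof -
  have "\<exists>G. finite G \<and> nondvd_support p n (ps_mult c d) \<subseteq> G \<and>
      P ^ n dvd ps_eval p c x * ps_eval p d x - (\<Sum>m\<in>G. ps_mult c d m * mono_eval x m)" for n
  proof (intro exI conjI)
    let ?A = "nondvd_support p n c" and ?B = "nondvd_support p n d"
    let ?G = "(\<lambda>(a, b). a + b) ` (?A \<times> ?B)"
    let ?pairs = "\<lambda>m. {(a, b) \<in> ?A \<times> ?B. a + b = m}"
    let ?sA = "\<Sum>a\<in>?A. c a * mono_eval x a" and ?sB = "\<Sum>b\<in>?B. d b * mono_eval x b"
    have fA: "finite ?A" and fB: "finite ?B" using assms finite_nondvd_support by blast+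
    show "finite ?G" using fA fB by blast
    show "nondvd_support p n (ps_mult c d) \<subseteq> ?G"
    proof
      fix m assume m: "m \<in> nondvd_support p n (ps_mult c d)"
      show "m \<in> ?G"
      proof (rule ccontr)
        assume "m \<notin> ?G"
        then have "?pairs m = {}" by blast
        then have "P ^ n dvd ps_mult c d m"
          using ps_mult_coeff_approx[OF fA fB order_refl order_refl, of m] by (simp only: sum.empty diff_zero)
        then show False using m by (simp add: nondvd_support_def)
      qed
    qed
    have "P ^ n dvd (\<Sum>m\<in>?G. ps_mult c d m * mono_eval x m) - (\<Sum>m\<in>?G. (\<Sum>(a, b)\<in>?pairs m. c a * d b) * mono_eval x m)"
      unfolding sum_subtractf[symmetric] left_diff_distrib[symmetric]
      using ps_mult_coeff_approx[OF fA fB order_refl order_refl] by (intro dvd_sum dvd_mult2)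
    also have "(\<Sum>m\<in>?G. (\<Sum>(a, b)\<in>?pairs m. c a * d b) * mono_eval x m) = ?sA * ?sB"
    proof -
      have "(\<Sum>m\<in>?G. (\<Sum>(a, b)\<in>?pairs m. c a * d b) * mono_eval x m)
          = (\<Sum>m\<in>?G. \<Sum>ab\<in>{ab \<in> ?A \<times> ?B. (\<lambda>(a, b). a + b) ab = m}. (\<lambda>(a, b). c a * d b * mono_eval x (a + b)) ab)"
        unfolding sum_distrib_right by (intro sum.cong refl) (auto simp: case_prod_beta)
      also have "\<dots> = (\<Sum>(a, b)\<in>?A \<times> ?B. c a * d b * mono_eval x (a + b))"
        using fA fB by (intro sum.group) auto
      also have "\<dots> = ?sA * ?sB"
        unfolding sum_product sum.cartesian_product by (intro sum.cong) (auto simp: mono_eval_add)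
      finally show ?thesis .
    qed
    finally have approx_product: "P ^ n dvd (\<Sum>m\<in>?G. ps_mult c d m * mono_eval x m) - ?sA * ?sB" .
    have "P ^ n dvd ps_eval p c x * ps_eval p d x - ?sA * ?sB"
      using ps_eval_approx[OF assms(1) fA order_refl] ps_eval_approx[OF assms(2) fB order_refl]
      by (rule dvd_mult_diff_mult)
    from dvd_diff[OF this approx_product]
    show "P ^ n dvd ps_eval p c x * ps_eval p d x - (\<Sum>m\<in>?G. ps_mult c d m * mono_eval x m)"
      by simp
  qed
  then show "ps_eval p (ps_mult c d) x = ps_eval p c x * ps_eval p d x" "restricted p (ps_mult c d)"
    by (rule ps_eval_eqI)+
qed

lemma ps_eval_ps_one: "ps_eval p ps_one x = (1::'a)"
  by (subst ps_eval_finite[of "{0}"]) (auto simp: ps_one_def)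

lemma ps_eval_ps_var: "ps_eval p (ps_var j) x = (x j :: 'a)"
  by (subst ps_eval_finite[of "{Poly_Mapping.single j 1}"]) (auto simp: ps_var_def)

lemma ps_eval_pow:
  fixes c :: "'a pser"
  assumes "restricted p c"
  shows "ps_eval p (ps_pow c k) x = ps_eval p c x ^ k" "restricted p (ps_pow c k)"
proof -
  have "ps_eval p (ps_pow c k) x = ps_eval p c x ^ k \<and> restricted p (ps_pow c k)"
    by (induction k) (auto simp: ps_pow_Suc ps_eval_ps_one ps_eval_mult assms
        restricted_if_finitely_supported finitely_supported_ps_one)
  then show "ps_eval p (ps_pow c k) x = ps_eval p c x ^ k" "restricted p (ps_pow c k)" by auto
qed

lemma ps_eval_pow_subst:
  fixes c :: "'a pser"
  assumes "restricted p c"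
  shows "ps_eval p (pow_subst p c) x = ps_eval p c (\<lambda>j. x j ^ p)" "restricted p (pow_subst p c)"
proof -
  have "\<exists>G. finite G \<and> nondvd_support p n (pow_subst p c) \<subseteq> G \<and>
      P ^ n dvd ps_eval p c (\<lambda>j. x j ^ p) - (\<Sum>m\<in>G. pow_subst p c m * mono_eval x m)" for n
  proof (intro exI conjI)
    have fin: "finite (nondvd_support p n c)" using assms by (rule finite_nondvd_support)
    then show "finite (pm_scale p ` nondvd_support p n c)" by simp
    show "nondvd_support p n (pow_subst p c) \<subseteq> pm_scale p ` nondvd_support p n c"
    proof
      fix m assume m: "m \<in> nondvd_support p n (pow_subst p c)"
      then have "pow_subst p c m \<noteq> 0" by (auto simp: nondvd_support_def)
      then have "m \<in> range (pm_scale p)" using pow_subst_outside_range by blast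
      then show "m \<in> pm_scale p ` nondvd_support p n c"
        using m p_pos by (auto simp: nondvd_support_def pow_subst_pm_scale)
    qed
    have "inj_on (pm_scale p) (nondvd_support p n c)"
      using p_pos by (auto simp: inj_on_def pm_scale_eq_iff)
    then have "(\<Sum>m\<in>pm_scale p ` nondvd_support p n c. pow_subst p c m * mono_eval x m)
        = (\<Sum>m\<in>nondvd_support p n c. c m * mono_eval (\<lambda>j. x j ^ p) m)"
      using p_pos by (simp add: sum.reindex pow_subst_pm_scale mono_eval_pm_scale)
    then show "P ^ n dvd ps_eval p c (\<lambda>j. x j ^ p) - (\<Sum>m\<in>pm_scale p ` nondvd_support p n c. pow_subst p c m * mono_eval x m)"
      using ps_eval_approx[OF assms fin order_refl] by simp
  qed
  then show "ps_eval p (pow_subst p c) x = ps_eval p c (\<lambda>j. x j ^ p)" "restricted p (pow_subst p c)"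
    by (rule ps_eval_eqI)+
qed

lemma ps_eval_div_p:
  fixes h :: "'a pser"
  assumes "restricted p h" "\<And>n. P dvd h n"
  shows "P * ps_eval p (\<lambda>n. div_p p (h n)) x = ps_eval p h x" "restricted p (\<lambda>n. div_p p (h n))"
proof -
  let ?q = "\<lambda>n. div_p p (h n)"
  have h_eq: "h = ps_smul P ?q" unfolding ps_smul_def using mult_div_p[OF assms(2)] by simp
  have "nondvd_support p n ?q \<subseteq> nondvd_support p (Suc n) h" for n
  proof
    fix m assume m: "m \<in> nondvd_support p n ?q"
    have "\<not> P ^ Suc n dvd h m"
    proof
      assume "P ^ Suc n dvd h m"
      then have "P ^ Suc n dvd P * ?q m" by (simp only: mult_div_p[OF assms(2)])
      then have "P ^ n dvd ?q m" by (rule p_pow_Suc_dvd_mult_p_cancel)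
      then show False using m unfolding nondvd_support_def by simp
    qed
    then show "m \<in> nondvd_support p (Suc n) h" by (simp add: nondvd_support_def)
  qed
  then show r: "restricted p ?q"
    using assms(1) unfolding restricted_iff_finite_nondvd_support by (meson finite_subset)
  have "ps_eval p h x = ps_eval p (ps_smul P ?q) x" using h_eq by (rule arg_cong)
  then show "P * ps_eval p ?q x = ps_eval p h x" using ps_eval_smul(1)[OF r] by simp
qed

lemma restricted_ps_deriv: "restricted p h \<Longrightarrow> restricted p (ps_deriv j h)"
proof -
  assume h: "restricted p h"
  have "nondvd_support p n (ps_deriv j h) \<subseteq> (\<lambda>m. m + Poly_Mapping.single j 1) -` nondvd_support p n h" for n
    unfolding nondvd_support_def ps_deriv_def by (auto simp del: of_nat_Suc)
  moreover have "finite ((\<lambda>m. m + Poly_Mapping.single j 1) -` nondvd_support p n h)" for n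
    using h by (intro finite_vimageI finite_nondvd_support) (auto simp: inj_def)
  ultimately show ?thesis unfolding restricted_iff_finite_nondvd_support by (meson finite_subset)
qed

lemma ps_eval_frob_var: "ps_eval p (frob_var p j) x = x j ^ p + P * (x (Suc j) :: 'a)"
proof -
  have r: "restricted p (ps_var i :: 'a pser)" for i
    by (rule restricted_if_finitely_supported[OF finitely_supported_ps_var])
  show ?thesis unfolding frob_var_def
    by (simp add: r ps_eval_add ps_eval_pow ps_eval_smul ps_eval_ps_var)
qed

lemma ps_eval_frob_mono:
  fixes x :: "nat \<Rightarrow> 'a"
  shows "ps_eval p (frob_mono p m) x = mono_eval (\<lambda>j. x j ^ p + P * x (Suc j)) m"
proof -
  have frob_prod: "ps_eval p (frob_prod p e L) x = (\<Prod>j\<leftarrow>L. (x j ^ p + P * x (Suc j)) ^ e j :: 'a)" for e L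
  proof (induction L)
    case (Cons j L)
    have "restricted p (ps_pow (frob_var p j) (e j) :: 'a pser)" "restricted p (frob_prod p e L :: 'a pser)"
      by (intro restricted_if_finitely_supported finitely_supported_ps_pow finitely_supported_frob_var
          finitely_supported_frob_prod)+
    then show ?case unfolding frob_prod_Cons
      by (simp add: Cons ps_eval_mult ps_eval_pow restricted_if_finitely_supported
          finitely_supported_frob_var ps_eval_frob_var)
  qed (simp add: frob_prod_def ps_eval_ps_one)
  show ?thesis unfolding frob_mono_eq_frob_prod frob_prod mono_eval_def
    by (simp add: prod.distinct_set_conv_list[symmetric])
qed

lemma ps_eval_deriv_approx:
  fixes h :: "'a pser"
  assumes h: "restricted p h" and G: "finite G" "nondvd_support p 1 h \<subseteq> G"
  shows "P dvd ps_eval p (ps_deriv j h) a - (\<Sum>m\<in>G. h m * mono_deriv_eval j a m)"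
proof -
  let ?shift = "\<lambda>m. m + Poly_Mapping.single j (1::nat)"
  let ?G' = "?shift -` G"
  have inj_shift: "inj ?shift" by (auto simp: inj_def)
  have fin: "finite ?G'" using G(1) inj_shift by (rule finite_vimageI)
  have "nondvd_support p 1 (ps_deriv j h) \<subseteq> ?G'"
  proof
    fix m assume "m \<in> nondvd_support p 1 (ps_deriv j h)"
    then have "\<not> P dvd h (?shift m)"
      unfolding nondvd_support_def ps_deriv_def by (auto simp del: of_nat_Suc intro: dvd_mult)
    then show "m \<in> ?G'" using G(2) unfolding nondvd_support_def by auto
  qed
  then have "P dvd ps_eval p (ps_deriv j h) a - (\<Sum>m\<in>?G'. ps_deriv j h m * mono_eval a m)"
    using ps_eval_approx[OF restricted_ps_deriv[OF h] fin, of 1] by simp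
  also have "(\<Sum>m\<in>?G'. ps_deriv j h m * mono_eval a m) = (\<Sum>m\<in>?G'. h (?shift m) * mono_deriv_eval j a (?shift m))"
    unfolding ps_deriv_def mono_deriv_eval_add_single by (simp add: mult_ac)
  also have "\<dots> = (\<Sum>m\<in>?shift ` ?G'. h m * mono_deriv_eval j a m)"
    using sum.reindex[OF inj_on_subset[OF inj_shift subset_UNIV], of "\<lambda>m. h m * mono_deriv_eval j a m" ?G']
    by (simp only: comp_def)
  also have "\<dots> = (\<Sum>m\<in>G. h m * mono_deriv_eval j a m)"
  proof (rule sum.mono_neutral_left[OF G(1)])
    show "\<forall>m\<in>G - ?shift ` ?G'. h m * mono_deriv_eval j a m = 0"
    proof
      fix m assume m: "m \<in> G - ?shift ` ?G'"
      have "j \<notin> Poly_Mapping.keys m"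
      proof
        assume "j \<in> Poly_Mapping.keys m"
        then have "?shift (m - Poly_Mapping.single j 1) = m"
          by (intro poly_mapping_eqI) (auto simp: lookup_add lookup_minus lookup_single when_def in_keys_iff)
        then show False using m by (metis DiffE imageI vimageI)
      qed
      then show "h m * mono_deriv_eval j a m = 0" by (simp add: mono_deriv_eval_outside_keys)
    qed
  qed auto
  finally show ?thesis .
qed

lemma ps_eval_taylor:
  fixes h :: "'a pser" and a e :: "nat \<Rightarrow> 'a"
  assumes h: "restricted p h" "in_vars N h"
  shows "P ^ 2 dvd ps_eval p h (\<lambda>j. a j + P * e j) - ps_eval p h a
     - P * (\<Sum>j\<le>N. ps_eval p (ps_deriv j h) a * e j)"
proof -
  let ?G = "nondvd_support p 2 h"
  let ?b = "\<lambda>j. a j + P * e j"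
  let ?D = "\<lambda>j. \<Sum>m\<in>?G. h m * mono_deriv_eval j a m"
  have fin: "finite ?G" using h(1) by (rule finite_nondvd_support)
  have approx_b: "P ^ 2 dvd ps_eval p h ?b - (\<Sum>m\<in>?G. h m * mono_eval ?b m)"
    and approx_a: "P ^ 2 dvd ps_eval p h a - (\<Sum>m\<in>?G. h m * mono_eval a m)"
    using ps_eval_approx[OF h(1) fin order_refl] by auto
  have "P ^ 2 dvd (\<Sum>m\<in>?G. h m * (mono_eval ?b m - mono_eval a m - P * (\<Sum>j\<le>N. e j * mono_deriv_eval j a m)))"
  proof (intro dvd_sum)
    fix m
    show "P ^ 2 dvd h m * (mono_eval ?b m - mono_eval a m - P * (\<Sum>j\<le>N. e j * mono_deriv_eval j a m))"
      using h(2) mono_eval_taylor[of m N P a e] by (cases "h m = 0") (auto simp: in_vars_def)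
  qed
  moreover have "(\<Sum>m\<in>?G. h m * (P * (\<Sum>j\<le>N. e j * mono_deriv_eval j a m))) = P * (\<Sum>j\<le>N. e j * ?D j)"
    unfolding sum_distrib_left by (subst sum.swap) (simp add: algebra_simps)
  ultimately have taylor_sum: "P ^ 2 dvd (\<Sum>m\<in>?G. h m * mono_eval ?b m) - (\<Sum>m\<in>?G. h m * mono_eval a m)
      - P * (\<Sum>j\<le>N. e j * ?D j)"
    by (simp only: right_diff_distrib sum_subtractf)
  have "P dvd (\<Sum>j\<le>N. e j * (ps_eval p (ps_deriv j h) a - ?D j))"
    using ps_eval_deriv_approx[OF h(1) fin] nondvd_support_mono[of 1 2 p h]
    by (intro dvd_sum dvd_mult) auto
  then have deriv_sum: "P ^ 2 dvd P * (\<Sum>j\<le>N. e j * (ps_eval p (ps_deriv j h) a - ?D j))"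
    by (simp add: power2_eq_square mult_dvd_mono)
  have "ps_eval p h ?b - ps_eval p h a - P * (\<Sum>j\<le>N. ps_eval p (ps_deriv j h) a * e j)
     = (ps_eval p h ?b - (\<Sum>m\<in>?G. h m * mono_eval ?b m)) - (ps_eval p h a - (\<Sum>m\<in>?G. h m * mono_eval a m))
       + ((\<Sum>m\<in>?G. h m * mono_eval ?b m) - (\<Sum>m\<in>?G. h m * mono_eval a m) - P * (\<Sum>j\<le>N. e j * ?D j))
       - P * (\<Sum>j\<le>N. e j * (ps_eval p (ps_deriv j h) a - ?D j))"
    by (simp add: algebra_simps sum_subtractf sum_distrib_left)
  also have "P ^ 2 dvd \<dots>"
    by (rule dvd_diff[OF dvd_add[OF dvd_diff[OF approx_b approx_a] taylor_sum] deriv_sum])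
  finally show ?thesis .
qed

end

section \<open>Frobenius lifts and the p-derivation\<close>

locale frobenius_lift = p_adic_ring p for p +
  fixes phi :: "'a::comm_ring_1 \<Rightarrow> 'a"
  assumes p_not_unit: "\<not> of_nat p dvd (1::'a)"
    and phi_1 [simp]: "phi 1 = 1"
    and phi_add [simp]: "phi (x + y) = phi x + phi y"
    and phi_mult [simp]: "phi (x * y) = phi x * phi y"
    and phi_lift: "of_nat p dvd phi x - x ^ p"
begin

lemma phi_0 [simp]: "phi 0 = 0"
  using phi_add[of 0 0] by simp

lemma phi_uminus [simp]: "phi (- x) = - phi x"
  using phi_add[of x "- x"] by (simp add: eq_neg_iff_add_eq_0 add.commute)

lemma phi_diff [simp]: "phi (x - y) = phi x - phi y"
  using phi_add[of x "- y"] by simp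

lemma phi_of_nat [simp]: "phi (of_nat n) = of_nat n"
  by (induction n) auto

lemma phi_power [simp]: "phi (x ^ n) = phi x ^ n"
  by (induction n) auto

lemma phi_sum: "phi (sum f A) = (\<Sum>a\<in>A. phi (f a))"
  by (induction A rule: infinite_finite_induct) auto

lemma phi_prod: "phi (prod f A) = (\<Prod>a\<in>A. phi (f a))"
  by (induction A rule: infinite_finite_induct) auto

lemma phi_dvd: "a dvd b \<Longrightarrow> phi a dvd phi b"
  by (auto elim!: dvdE)

lemma p_pow_dvd_phi: "P ^ n dvd x \<Longrightarrow> P ^ n dvd phi x"
  using phi_dvd[of "P ^ n" x] by simp

lemma mult_p_delta: "P * delta p phi x = phi x - x ^ p"
  unfolding delta_def by (rule mult_div_p[OF phi_lift])

lemma delta_0 [simp]: "delta p phi 0 = 0"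
  unfolding delta_def using p_pos by (simp add: zero_power)

lemma delta_iter_0 [simp]: "(delta p phi ^^ i) 0 = 0"
  by (induction i) auto

lemma nondvd_support_coeff_phi: "nondvd_support p n (coeff_phi phi c) \<subseteq> nondvd_support p n c"
  unfolding nondvd_support_def coeff_phi_def by (auto intro: p_pow_dvd_phi)

lemma restricted_coeff_phi: "restricted p c \<Longrightarrow> restricted p (coeff_phi phi c)"
  unfolding restricted_iff_finite_nondvd_support by (meson finite_subset nondvd_support_coeff_phi)

lemma ps_eval_coeff_phi:
  fixes c :: "'a pser"
  assumes "restricted p c"
  shows "ps_eval p (coeff_phi phi c) (\<lambda>j. phi (x j)) = phi (ps_eval p c x)"
proof (rule ps_eval_eqI)
  fix n
  have fin: "finite (nondvd_support p n c)" using assms by (rule finite_nondvd_support)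
  have "P ^ n dvd phi (ps_eval p c x - (\<Sum>m\<in>nondvd_support p n c. c m * mono_eval x m))"
    using ps_eval_approx[OF assms fin order_refl] by (rule p_pow_dvd_phi)
  then show "\<exists>G. finite G \<and> nondvd_support p n (coeff_phi phi c) \<subseteq> G \<and>
      P ^ n dvd phi (ps_eval p c x) - (\<Sum>m\<in>G. coeff_phi phi c m * mono_eval (\<lambda>j. phi (x j)) m)"
    using fin nondvd_support_coeff_phi
    by (intro exI[of _ "nondvd_support p n c"]) (simp add: phi_sum coeff_phi_def mono_eval_def phi_prod)
qed

lemma ps_phi_coeff_approx:
  fixes g :: "'a pser"
  assumes "restricted p g"
  shows "P ^ k dvd ps_phi p phi g n - (\<Sum>m\<in>nondvd_support p k g. phi (g m) * frob_mono p m n)"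
  unfolding ps_phi_def
proof (rule dvd_sum_diff_if_dvd_symdiff)
  show "finite {m. g m \<noteq> 0 \<and> (frob_mono p m n :: 'a) \<noteq> 0}"
    using finite_frob_mono_sources[OF p_pos, of n] by (rule finite_subset[rotated]) auto
  show "finite (nondvd_support p k g)" using assms by (rule finite_nondvd_support)
  fix m assume "m \<in> ({m. g m \<noteq> 0 \<and> (frob_mono p m n :: 'a) \<noteq> 0} - nondvd_support p k g) \<union>
      (nondvd_support p k g - {m. g m \<noteq> 0 \<and> (frob_mono p m n :: 'a) \<noteq> 0})"
  then show "P ^ k dvd phi (g m) * frob_mono p m n"
    by (auto simp: nondvd_support_def intro: dvd_mult2 p_pow_dvd_phi)
qed

lemma ps_eval_ps_phi:
  fixes g :: "'a pser" and x :: "nat \<Rightarrow> 'a"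
  assumes g: "restricted p g"
  shows "ps_eval p (ps_phi p phi g) x = ps_eval p (coeff_phi phi g) (\<lambda>j. x j ^ p + P * x (Suc j))"
    "restricted p (ps_phi p phi g)"
proof -
  let ?y = "\<lambda>j. x j ^ p + P * x (Suc j)"
  let ?F = "\<lambda>m. (frob_mono p m :: 'a pser)"
  have "\<exists>N. finite N \<and> nondvd_support p k (ps_phi p phi g) \<subseteq> N \<and>
      P ^ k dvd ps_eval p (coeff_phi phi g) ?y - (\<Sum>n\<in>N. ps_phi p phi g n * mono_eval x n)" for k
  proof (intro exI conjI)
    let ?A = "nondvd_support p k g"
    let ?N = "\<Union>m\<in>?A. {n. ?F m n \<noteq> 0}"
    let ?T = "\<lambda>n. \<Sum>m\<in>?A. phi (g m) * ?F m n"
    have fin_A: "finite ?A" using g by (rule finite_nondvd_support)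
    show fin_N: "finite ?N"
      using fin_A finitely_supported_frob_mono unfolding finitely_supported_def by blast
    show "nondvd_support p k (ps_phi p phi g) \<subseteq> ?N"
    proof
      fix n assume n: "n \<in> nondvd_support p k (ps_phi p phi g)"
      show "n \<in> ?N"
      proof (rule ccontr)
        assume "n \<notin> ?N"
        then have "?T n = 0" by (intro sum.neutral) auto
        then show False using n ps_phi_coeff_approx[OF g, of k n] by (simp add: nondvd_support_def)
      qed
    qed
    have approx_N: "P ^ k dvd (\<Sum>n\<in>?N. ps_phi p phi g n * mono_eval x n) - (\<Sum>n\<in>?N. ?T n * mono_eval x n)"
      unfolding sum_subtractf[symmetric] left_diff_distrib[symmetric]
      using ps_phi_coeff_approx[OF g] by (intro dvd_sum dvd_mult2)
    have regroup: "(\<Sum>n\<in>?N. ?T n * mono_eval x n) = (\<Sum>m\<in>?A. coeff_phi phi g m * mono_eval ?y m)"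
    proof -
      have "(\<Sum>n\<in>?N. ?T n * mono_eval x n) = (\<Sum>m\<in>?A. phi (g m) * (\<Sum>n\<in>?N. ?F m n * mono_eval x n))"
        unfolding sum_distrib_right sum_distrib_left by (subst sum.swap) (simp add: mult.assoc)
      also have "\<dots> = (\<Sum>m\<in>?A. phi (g m) * ps_eval p (?F m) x)"
        using fin_N by (intro sum.cong refl arg_cong[where f = "\<lambda>t. phi (g _) * t"] ps_eval_finite[symmetric]) auto
      finally show ?thesis by (simp add: ps_eval_frob_mono coeff_phi_def)
    qed
    have "P ^ k dvd ps_eval p (coeff_phi phi g) ?y - (\<Sum>m\<in>?A. coeff_phi phi g m * mono_eval ?y m)"
      using ps_eval_approx[OF restricted_coeff_phi[OF g] fin_A nondvd_support_coeff_phi] .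
    from dvd_diff[OF this approx_N[unfolded regroup]]
    show "P ^ k dvd ps_eval p (coeff_phi phi g) ?y - (\<Sum>n\<in>?N. ps_phi p phi g n * mono_eval x n)"
      by simp
  qed
  then show "ps_eval p (ps_phi p phi g) x = ps_eval p (coeff_phi phi g) ?y" "restricted p (ps_phi p phi g)"
    by (rule ps_eval_eqI)+
qed

text \<open>The numerators of \<open>\<delta>g\<close> and \<open>\<partial>g/\<partial>p\<close> are divisible by \<open>p\<close> coefficientwise, so the
  \<open>div_p\<close> in \<open>ps_delta\<close> and \<open>ps_dp\<close> is exact division and not a junk value: both
  \<open>\<phi>(g)\<close> and \<open>g\<^sup>(\<^sup>\<phi>\<^sup>)(y\<^sup>p)\<close> are congruent to \<open>g\<^sup>p\<close> modulo \<open>p\<close>.\<close>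

lemma ps_phi_cong_pow_subst: "P dvd ps_phi p phi g n - pow_subst p (coeff_phi phi g) n"
proof -
  let ?F = "\<lambda>m. (frob_mono p m :: 'a pser)"
  let ?M = "{m. g m \<noteq> 0 \<and> ?F m n \<noteq> 0}"
  have fin: "finite ?M" using finite_frob_mono_sources[OF p_pos, of n] by (rule finite_subset[rotated]) auto
  have cong: "P dvd ?F m n - ps_monom (pm_scale p m) n" for m
    using ps_cong_p_frob_mono[of p m] unfolding ps_cong_p_def by blast
  have "P dvd ps_phi p phi g n - (\<Sum>m\<in>?M. phi (g m) * ps_monom (pm_scale p m) n)"
    unfolding ps_phi_def sum_subtractf[symmetric] right_diff_distrib[symmetric]
    using cong by (intro dvd_sum dvd_mult)
  moreover have "(\<Sum>m\<in>?M. phi (g m) * ps_monom (pm_scale p m) n) = pow_subst p (coeff_phi phi g) n"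
  proof (cases "n \<in> range (pm_scale p)")
    case True
    then obtain m0 where n: "n = pm_scale p m0" by blast
    have "(\<Sum>m\<in>?M. phi (g m) * ps_monom (pm_scale p m) n) = (\<Sum>m\<in>?M. if m0 = m then phi (g m) else 0)"
      using n p_pos by (intro sum.cong) (auto simp: ps_monom_def pm_scale_eq_iff)
    also have "\<dots> = (if m0 \<in> ?M then phi (g m0) else 0)" by (rule sum.delta'[OF fin])
    also have "\<dots> = phi (g m0)"
    proof -
      have "?F m0 n \<noteq> 0"
      proof
        assume "?F m0 n = 0"
        then have "P dvd 1" using cong[of m0] n by (simp add: ps_monom_def)
        then show False using p_not_unit by simp
      qed
      then show ?thesis by auto
    qed
    finally show ?thesis using n p_pos by (simp add: pow_subst_pm_scale coeff_phi_def)
  next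
    case False
    then have "(\<Sum>m\<in>?M. phi (g m) * ps_monom (pm_scale p m) n) = 0"
      by (intro sum.neutral) (auto simp: ps_monom_def)
    then show ?thesis using False by (simp add: pow_subst_outside_range)
  qed
  ultimately show ?thesis by simp
qed

lemma pow_subst_coeff_phi_cong: "P dvd pow_subst p (coeff_phi phi g) n - pow_subst p (\<lambda>m. g m ^ p) n"
proof (cases "n \<in> range (pm_scale p)")
  case True
  then obtain m0 where "n = pm_scale p m0" by blast
  then show ?thesis using p_pos by (simp add: pow_subst_pm_scale coeff_phi_def phi_lift)
qed (simp add: pow_subst_outside_range)

lemma pow_subst_coeff_phi_cong_ps_pow: "P dvd pow_subst p (coeff_phi phi g) n - ps_pow g p n"
  using dvd_diff[OF pow_subst_coeff_phi_cong[of g n] ps_pow_prime_cong[OF prime, of g n]] by simp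

lemma ps_phi_cong_ps_pow: "P dvd ps_phi p phi g n - ps_pow g p n"
  using dvd_add[OF ps_phi_cong_pow_subst[of g n] pow_subst_coeff_phi_cong_ps_pow[of g n]] by simp

lemma ps_eval_ps_delta:
  fixes g :: "'a pser" and x :: "nat \<Rightarrow> 'a"
  assumes g: "restricted p g"
  shows "P * ps_eval p (ps_delta p phi g) x
      = ps_eval p (coeff_phi phi g) (\<lambda>j. x j ^ p + P * x (Suc j)) - ps_eval p g x ^ p"
    "restricted p (ps_delta p phi g)"
proof -
  let ?h = "\<lambda>n. ps_phi p phi g n - ps_pow g p n"
  have r1: "restricted p (ps_phi p phi g)" and r2: "restricted p (ps_pow g p)"
    using ps_eval_ps_phi(2)[OF g] ps_eval_pow(2)[OF g] .
  have eq: "ps_delta p phi g = (\<lambda>n. div_p p (?h n))" unfolding ps_delta_def ..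
  note div = ps_eval_div_p[OF ps_eval_diff(2)[OF r1 r2] ps_phi_cong_ps_pow]
  show "restricted p (ps_delta p phi g)" unfolding eq by (rule div(2))
  show "P * ps_eval p (ps_delta p phi g) x
      = ps_eval p (coeff_phi phi g) (\<lambda>j. x j ^ p + P * x (Suc j)) - ps_eval p g x ^ p"
    unfolding eq div(1) ps_eval_diff(1)[OF r1 r2] ps_eval_ps_phi(1)[OF g] ps_eval_pow(1)[OF g] ..
qed

lemma ps_eval_ps_dp:
  fixes g :: "'a pser" and x :: "nat \<Rightarrow> 'a"
  assumes g: "restricted p g"
  shows "P * ps_eval p (ps_dp p phi g) x = ps_eval p (coeff_phi phi g) (\<lambda>j. x j ^ p) - ps_eval p g x ^ p"
proof -
  let ?h = "\<lambda>n. pow_subst p (coeff_phi phi g) n - ps_pow g p n"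
  note g_phi = restricted_coeff_phi[OF g]
  have r1: "restricted p (pow_subst p (coeff_phi phi g))" and r2: "restricted p (ps_pow g p)"
    using ps_eval_pow_subst(2)[OF g_phi] ps_eval_pow(2)[OF g] .
  have eq: "ps_dp p phi g = (\<lambda>n. div_p p (?h n))" unfolding ps_dp_def ..
  show ?thesis
    unfolding eq ps_eval_div_p(1)[OF ps_eval_diff(2)[OF r1 r2] pow_subst_coeff_phi_cong_ps_pow]
      ps_eval_diff(1)[OF r1 r2] ps_eval_pow_subst(1)[OF g_phi] ps_eval_pow(1)[OF g] ..
qed

lemma in_vars_coeff_phi: "in_vars N g \<Longrightarrow> in_vars N (coeff_phi phi g)"
  unfolding in_vars_def coeff_phi_def by (metis phi_0)

lemma in_vars_ps_delta:
  assumes "in_vars N g"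
  shows "in_vars (Suc N) (ps_delta p phi g)"
  unfolding in_vars_def
proof (intro allI impI)
  fix n assume "ps_delta p phi g n \<noteq> 0"
  then have "ps_phi p phi g n \<noteq> 0 \<or> ps_pow g p n \<noteq> 0" unfolding ps_delta_def by auto
  then show "Poly_Mapping.keys n \<subseteq> {..Suc N}"
  proof
    assume "ps_phi p phi g n \<noteq> 0"
    then obtain m where m: "g m \<noteq> 0" "(frob_mono p m n :: 'a) \<noteq> 0"
      unfolding ps_phi_def by (auto elim: sum.not_neutral_contains_not_neutral)
    then have "Poly_Mapping.keys m \<subseteq> {..N}" using assms unfolding in_vars_def by blast
    then have "(\<Union>j\<in>Poly_Mapping.keys m. {j, Suc j}) \<subseteq> {..Suc N}" by auto
    with frob_mono_nonzero[OF m(2) p_pos] show ?thesis by blast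
  next
    assume "ps_pow g p n \<noteq> 0"
    then show ?thesis using in_vars_ps_pow[OF assms] unfolding in_vars_def by fastforce
  qed
qed

text \<open>This is why evaluation at \<open>\<nabla>u\<close> commutes with \<open>\<delta>\<close>.\<close>

lemma phi_nabla: "nabla p phi u j ^ p + P * nabla p phi u (Suc j) = phi (nabla p phi u j)"
  unfolding nabla_def using mult_p_delta[of "(delta p phi ^^ j) u"] by simp

lemma ps_eval_ps_delta_nabla:
  assumes g: "restricted p g"
  shows "ps_eval p (ps_delta p phi g) (nabla p phi u) = delta p phi (ps_eval p g (nabla p phi u))"
proof (rule mult_p_cancel)
  show "P * ps_eval p (ps_delta p phi g) (nabla p phi u) = P * delta p phi (ps_eval p g (nabla p phi u))"
    unfolding ps_eval_ps_delta(1)[OF g] phi_nabla ps_eval_coeff_phi[OF g] mult_p_delta ..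
qed

lemma ps_delta_iter:
  assumes "restricted p f" "in_vars r f"
  shows "restricted p ((ps_delta p phi ^^ i) f)" "in_vars (r + i) ((ps_delta p phi ^^ i) f)"
    "ps_eval p ((ps_delta p phi ^^ i) f) (nabla p phi u) = (delta p phi ^^ i) (ps_eval p f (nabla p phi u))"
proof -
  have "restricted p ((ps_delta p phi ^^ i) f) \<and> in_vars (r + i) ((ps_delta p phi ^^ i) f) \<and>
      ps_eval p ((ps_delta p phi ^^ i) f) (nabla p phi u) = (delta p phi ^^ i) (ps_eval p f (nabla p phi u))"
    by (induction i) (simp_all add: assms ps_eval_ps_delta(2) in_vars_ps_delta ps_eval_ps_delta_nabla)
  then show "restricted p ((ps_delta p phi ^^ i) f)" "in_vars (r + i) ((ps_delta p phi ^^ i) f)"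
    "ps_eval p ((ps_delta p phi ^^ i) f) (nabla p phi u) = (delta p phi ^^ i) (ps_eval p f (nabla p phi u))"
    by auto
qed

text \<open>Expand \<open>p (\<delta>g)(\<nabla>u) = g\<^sup>(\<^sup>\<phi>\<^sup>)(\<nabla>(u)\<^sup>p + p \<delta>\<nabla>u) - g(\<nabla>u)\<^sup>p\<close> to first order around \<open>\<nabla>(u)\<^sup>p\<close> and compare
  with \<open>p (\<partial>g/\<partial>p)(\<nabla>u) = g\<^sup>(\<^sup>\<phi>\<^sup>)(\<nabla>(u)\<^sup>p) - g(\<nabla>u)\<^sup>p\<close> modulo \<open>p\<^sup>2\<close>.\<close>

lemma dp_condition_iff_p_dvd_delta:
  assumes g: "restricted p g" and gv: "in_vars N g"
  shows "P dvd ps_eval p (ps_dp p phi g) (nabla p phi u)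
       + (\<Sum>j\<le>N. ps_eval p (ps_deriv j (coeff_phi phi g)) (nabla_pow p phi u) * (delta p phi ^^ Suc j) u)
     \<longleftrightarrow> P dvd ps_eval p (ps_delta p phi g) (nabla p phi u)"
proof -
  let ?x = "nabla p phi u"
  let ?a = "nabla_pow p phi u" and ?e = "\<lambda>j. ?x (Suc j)"
  let ?dp = "ps_eval p (ps_dp p phi g) ?x" and ?dg = "ps_eval p (ps_delta p phi g) ?x"
  let ?Sig = "\<Sum>j\<le>N. ps_eval p (ps_deriv j (coeff_phi phi g)) ?a * ?e j"
  have a: "?a = (\<lambda>j. ?x j ^ p)" unfolding nabla_pow_def nabla_def ..
  have "P * (?dg - (?dp + ?Sig)) = ps_eval p (coeff_phi phi g) (\<lambda>j. ?a j + P * ?e j)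
      - ps_eval p (coeff_phi phi g) ?a - P * ?Sig"
    unfolding right_diff_distrib distrib_left ps_eval_ps_delta(1)[OF g] ps_eval_ps_dp[OF g] a
    by simp
  also have "P ^ Suc 1 dvd \<dots>"
    using ps_eval_taylor[OF restricted_coeff_phi[OF g] in_vars_coeff_phi[OF gv]] by (simp add: numeral_2_eq_2)
  finally have "P dvd ?dg - (?dp + ?Sig)"
    using p_pow_Suc_dvd_mult_p_cancel[of 1] by simp
  then have "P dvd (?dg - (?dp + ?Sig)) + (?dp + ?Sig) \<longleftrightarrow> P dvd ?dp + ?Sig"
    by (rule dvd_add_right_iff)
  then show ?thesis unfolding nabla_def by simp
qed

end

section \<open>Detecting zero through the iterates of \<open>\<delta>\<close>\<close>

locale witt_frobenius = frobenius_lift p phi for p and phi :: "'a::comm_ring_1 \<Rightarrow> 'a" +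
  assumes residue_inverse: "\<not> of_nat p dvd (x::'a) \<Longrightarrow> \<exists>y. of_nat p dvd x * y - 1"
begin

lemma not_p_dvd_mult: "\<not> P dvd a \<Longrightarrow> \<not> P dvd b \<Longrightarrow> \<not> P dvd a * b"
proof
  assume "\<not> P dvd a" "\<not> P dvd b" and ab: "P dvd a * b"
  obtain y where y: "P dvd a * y - 1" using residue_inverse \<open>\<not> P dvd a\<close> by blast
  obtain z where z: "P dvd b * z - 1" using residue_inverse \<open>\<not> P dvd b\<close> by blast
  have "1 = a * b * (y * z) - (a * y - 1) * (b * z - 1) - (a * y - 1) - (b * z - 1)"
    by (simp add: algebra_simps)
  also have "P dvd \<dots>"
  proof -
    have "P dvd a * b * (y * z)" "P dvd (a * y - 1) * (b * z - 1)" using ab y by simp_all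
    from dvd_diff[OF dvd_diff[OF dvd_diff[OF this] y] z] show ?thesis .
  qed
  finally show False using p_not_unit by simp
qed

lemma not_p_dvd_power: "\<not> P dvd a \<Longrightarrow> \<not> P dvd a ^ k"
  by (induction k) (auto simp: p_not_unit not_p_dvd_mult)

lemma not_p_dvd_phi: "\<not> P dvd w \<Longrightarrow> \<not> P dvd phi w"
proof
  assume "\<not> P dvd w" "P dvd phi w"
  from \<open>P dvd phi w\<close> phi_lift[of w] have "P dvd phi w - (phi w - w ^ p)" by (rule dvd_diff)
  then show False using not_p_dvd_power[OF \<open>\<not> P dvd w\<close>, of p] by simp
qed

lemma p_adic_valuation:
  assumes "x \<noteq> 0"
  obtains k w where "x = P ^ k * w" "\<not> P dvd w"
proof -
  have ex: "\<exists>n. \<not> P ^ n dvd x" using separated assms by blast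
  define n where "n = (LEAST n. \<not> P ^ n dvd x)"
  have n: "\<not> P ^ n dvd x" unfolding n_def by (rule LeastI_ex[OF ex])
  then obtain k where k: "n = Suc k" by (cases n) auto
  have "P ^ k dvd x" using not_less_Least[of k "\<lambda>n. \<not> P ^ n dvd x"] k n_def by auto
  then obtain w where w: "x = P ^ k * w" by (auto elim: dvdE)
  moreover have "\<not> P dvd w"
  proof
    assume "P dvd w"
    then obtain v where "w = P * v" by (rule dvdE)
    then have "x = P ^ n * v" using w k by (simp add: mult_ac)
    then show False using n by simp
  qed
  ultimately show ?thesis by (rule that)
qed

text \<open>\<open>\<delta>(p\<^sup>k\<^sup>+\<^sup>1 w) = p\<^sup>k w'\<close> with
  \<open>w' = \<phi>(w) - p\<^sup>(\<^sup>k\<^sup>+\<^sup>1\<^sup>)\<^sup>(\<^sup>p\<^sup>-\<^sup>1\<^sup>) w\<^sup>p \<equiv> \<phi>(w) mod p\<close>.\<close>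

lemma not_p_dvd_delta_iter: "\<not> P dvd w \<Longrightarrow> \<not> P dvd (delta p phi ^^ k) (P ^ k * w)"
proof (induction k arbitrary: w)
  case (Suc k)
  define w' where "w' = phi w - P ^ (Suc k * (p - 1)) * w ^ p"
  have "Suc k * p = Suc k + Suc k * (p - 1)" using p_pos
    by (metis Suc_diff_1 mult_Suc_right)
  then have pow_eq: "(P ^ Suc k) ^ p = P * P ^ k * P ^ (Suc k * (p - 1))"
    by (simp only: power_mult[symmetric] power_add) simp
  have "P * delta p phi (P ^ Suc k * w) = P ^ Suc k * phi w - (P ^ Suc k) ^ p * w ^ p"
    by (simp add: mult_p_delta power_mult_distrib)
  also have "\<dots> = P * (P ^ k * w')"
    unfolding pow_eq w'_def by (simp add: algebra_simps)
  finally have "delta p phi (P ^ Suc k * w) = P ^ k * w'" by (rule mult_p_cancel)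
  moreover have "\<not> P dvd w'"
  proof
    assume "P dvd w'"
    moreover have "P dvd P ^ (Suc k * (p - 1)) * w ^ p"
      using p_pos prime_ge_2_nat[OF prime] by (intro dvd_mult2) (simp add: dvd_power)
    ultimately have "P dvd phi w" unfolding w'_def by (metis diff_add_cancel dvd_add)
    then show False using not_p_dvd_phi Suc.prems by blast
  qed
  ultimately show ?case using Suc.IH by (simp only: funpow_Suc_right comp_def)
qed simp

lemma eq_0_iff_p_dvd_delta_iter: "x = 0 \<longleftrightarrow> (\<forall>i. P dvd (delta p phi ^^ i) x)"
proof
  assume all: "\<forall>i. P dvd (delta p phi ^^ i) x"
  show "x = 0"
  proof (rule ccontr)
    assume "x \<noteq> 0"
    then obtain k w where "x = P ^ k * w" "\<not> P dvd w" by (rule p_adic_valuation)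
    then show False using all not_p_dvd_delta_iter by blast
  qed
qed simp

lemma eq_0_iff_p_dvd_and_delta_eq_0: "x = 0 \<longleftrightarrow> P dvd x \<and> delta p phi x = 0"
proof
  assume "P dvd x \<and> delta p phi x = 0"
  then have "P dvd (delta p phi ^^ i) x" for i
    by (cases i) (auto simp: funpow_Suc_right simp del: funpow.simps)
  then show "x = 0" using eq_0_iff_p_dvd_delta_iter by blast
qed simp

end

theorem proposition5p2:
  fixes p :: nat and phi :: "'a::comm_ring_1 \<Rightarrow> 'a" and f :: "'a pser"
    and r :: nat and u :: 'a
  assumes "prime p"
    and "Witt_Fpbar_Frobenius p phi"
    and "restricted p f"
    and "in_vars r f"
  defines "B \<equiv> (\<forall>i. of_nat p dvd
      (ps_eval p (ps_dp p phi ((ps_delta p phi ^^ i) f)) (nabla p phi u)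
       + (\<Sum>j\<le>r + i. ps_eval p (ps_deriv j (coeff_phi phi ((ps_delta p phi ^^ i) f)))
                          (nabla_pow p phi u)
                      * (delta p phi ^^ Suc j) u)))"
  shows "(ps_eval p f (nabla p phi u) = 0 \<longleftrightarrow>
            (of_nat p dvd ps_eval p f (nabla p phi u) \<and> B))
       \<and> (ps_eval p (ps_delta p phi f) (nabla p phi u) = 0 \<longleftrightarrow> B)"
proof -
  interpret witt_frobenius p phi
    using assms(2) unfolding Witt_Fpbar_Frobenius_def by unfold_locales blast+
  let ?v = "ps_eval p f (nabla p phi u)"
  note restricted_iter = ps_delta_iter(1)[OF assms(3,4)]
    and in_vars_iter = ps_delta_iter(2)[OF assms(3,4)]
    and eval_iter = ps_delta_iter(3)[OF assms(3,4), where u = u]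
  have "B \<longleftrightarrow> (\<forall>i. P dvd (delta p phi ^^ Suc i) ?v)"
    unfolding B_def dp_condition_iff_p_dvd_delta[OF restricted_iter in_vars_iter]
      ps_eval_ps_delta_nabla[OF restricted_iter] eval_iter
    by simp
  moreover have "ps_eval p (ps_delta p phi f) (nabla p phi u) = delta p phi ?v"
    by (rule ps_eval_ps_delta_nabla[OF assms(3)])
  ultimately show ?thesis
    using eq_0_iff_p_dvd_delta_iter[of "delta p phi ?v"] eq_0_iff_p_dvd_and_delta_eq_0[of ?v]
    by (simp add: funpow_Suc_right del: funpow.simps)
qed

end
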